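(* Let $\Omega\subset\mathbb H$ be an axially symmetric slice domain and $\omega=[g_v]$ a vectorial class on $\Omega$ whose global minimal representative $g_v$ is such that $\sqrt{g_v^s}$ is globally defined on $\Omega$ (i.e. there is a slice-regular slice-preserving $h$ on $\Omega$ with $h^2=g_v^s$). If $Z(\omega)=\varnothing$, then $\Gamma(\Omega,\mathcal K_\omega)\cong\mathbb Z$ (the sections being $2n\pi g_v/\sqrt{g_v^s}$, $n\in\mathbb Z$). If $Z(\omega)\neq\varnothing$, then $\Gamma(\Omega,\mathcal K_\omega)=0$.
   Context: $\mathbb S=\{I\in\mathbb H:I^2=-1\}$, $\mathbb C_I=\mathbb R+I\mathbb R$. Axially symmetric set: $x+Iy\in E\Rightarrow x+Jy\in E$ for all $J\in\mathbb S$. A slice domain is a domain $\Omega$ with $\Omega\cap\mathbb R\ne\varnothing$ and $\Omega\cap\mathbb C_I$ connected for every $I$. $\mathcal{SR}$: slice-regular functions ($f(x+Jy)=F_1(x+iy)+JF_2(x+iy)$, $F_1+\mathbf iF_2$ holomorphic into $\mathbb H\otimes\mathbb C$, $F_1(\bar z)=F_1(z)$, $F_2(\bar z)=-F_2(z)$), with $*$-product induced by stem functions; $\mathcal{SR}_{\mathbb R}$ the slice-preserving ones. $f=f_0+f_v$ with $f_v=f_1i+f_2j+f_3k$, $f_l\in\mathcal{SR}_{\mathbb R}$; $f^s=f_0^2+f_1^2+f_2^2+f_3^2$. A vectorial class $\omega$: given by local vectorial functions, locally pairwise linearly dependent over $\mathcal{SR}_{\mathbb R}$; a global minimal representative is a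 vectorial $g_v\in\mathcal{SR}(\Omega)$ representing $\omega$ with no real zeros and no spherical zeros, and $Z(\omega)$ is its zero set. $\mathcal{SR}_\omega$ = functions whose vectorial part is locally dependent over $\mathcal{SR}_{\mathbb R}$ with $g_v$. $\exp_*(f)=\sum_{n\ge0}f^{*n}/n!$. $\mathcal K_\omega$ is the sheaf (on axially symmetric open sets) of germs $f\in\mathcal{SR}_\omega$ with $\exp_*(f)=1$, and $\Gamma(\Omega,\mathcal K_\omega)$ its global sections. *)

theory Defs
  imports "HOL-Analysis.Analysis"
begin

text \<open>A quaternion a + b i + c j + d k is the tuple (a,b,c,d) :: real^4 (as a product type,
 which carries the Euclidean topology of R^4). Elements of H (x) C are tuples of
 complex numbers (a0 + a1 i + a2 j + a3 k with complex coefficients a_l, the complex unit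
 commuting with i,j,k); the algebra structure is the Hamilton product with coefficients in C.\<close>

type_synonym 'a quatern = "'a \<times> 'a \<times> 'a \<times> 'a"
type_synonym quat = "real quatern"
type_synonym bquat = "complex quatern"

definition hmul :: "('a::comm_ring) quatern \<Rightarrow> 'a quatern \<Rightarrow> 'a quatern" where
  "hmul p q = (case p of (a1,b1,c1,d1) \<Rightarrow> case q of (a2,b2,c2,d2) \<Rightarrow>
     (a1*a2 - b1*b2 - c1*c2 - d1*d2,
      a1*b2 + b1*a2 + c1*d2 - d1*c2,
      a1*c2 - b1*d2 + c1*a2 + d1*b2,
      a1*d2 + b1*c2 - c1*b2 + d1*a2))"

definition hone :: "('a::comm_ring_1) quatern" where "hone = (1,0,0,0)"

fun hpow :: "('a::comm_ring_1) quatern \<Rightarrow> nat \<Rightarrow> 'a quatern" where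
  "hpow x 0 = hone"
| "hpow x (Suc n) = hmul x (hpow x n)"

definition c0 :: "'a quatern \<Rightarrow> 'a" where "c0 p = fst p"
definition c1 :: "'a quatern \<Rightarrow> 'a" where "c1 p = fst (snd p)"
definition c2 :: "'a quatern \<Rightarrow> 'a" where "c2 p = fst (snd (snd p))"
definition c3 :: "'a quatern \<Rightarrow> 'a" where "c3 p = snd (snd (snd p))"

definition qof_real :: "real \<Rightarrow> quat" where "qof_real x = (x,0,0,0)"
definition qi :: quat where "qi = (0,1,0,0)"
definition qvec :: "quat \<Rightarrow> quat" where "qvec q = (0, c1 q, c2 q, c3 q)"
definition qconj :: "quat \<Rightarrow> quat" where "qconj q = (c0 q, - c1 q, - c2 q, - c3 q)"
definition qinv :: "quat \<Rightarrow> quat" where "qinv q = (1 / (norm q)\<^sup>2) *\<^sub>R qconj q"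

text \<open>real and imaginary parts of an element of H (x) C (F = F1 + i F2)\<close>
definition bre :: "bquat \<Rightarrow> quat" where
  "bre p = (Re (c0 p), Re (c1 p), Re (c2 p), Re (c3 p))"
definition bim :: "bquat \<Rightarrow> quat" where
  "bim p = (Im (c0 p), Im (c1 p), Im (c2 p), Im (c3 p))"
definition bcnj :: "bquat \<Rightarrow> bquat" where
  "bcnj p = (cnj (c0 p), cnj (c1 p), cnj (c2 p), cnj (c3 p))"

definition imag_units :: "quat set" ("\<SS>") where
  "\<SS> = {I. hmul I I = - hone}"

definition slice_plane :: "quat \<Rightarrow> quat set" where
  "slice_plane I = {qof_real x + y *\<^sub>R I | x y. True}"

definition axially_symmetric :: "quat set \<Rightarrow> bool" where
  "axially_symmetric E \<longleftrightarrow> (\<forall>x y I J. I \<in> \<SS> \<longrightarrow> J \<in> \<SS> \<longrightarrow>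
      qof_real x + y *\<^sub>R I \<in> E \<longrightarrow> qof_real x + y *\<^sub>R J \<in> E)"

definition slice_domain :: "quat set \<Rightarrow> bool" where
  "slice_domain \<Omega> \<longleftrightarrow> open \<Omega> \<and> connected \<Omega> \<and> (\<exists>x. qof_real x \<in> \<Omega>) \<and>
      (\<forall>I\<in>\<SS>. connected (\<Omega> \<inter> slice_plane I))"

definition slice_dom :: "quat set \<Rightarrow> complex set" where
  "slice_dom \<Omega> = {z. qof_real (Re z) + Im z *\<^sub>R qi \<in> \<Omega>}"

text \<open>The slice function induced by a stem F = F1 + i F2 : D \<rightarrow> H (x) C:
  f(x + J y) = F1(x + i y) + J F2(x + i y); we write q = x + J y with y = |Im q| \<ge> 0.\<close>
definition slicefun :: "(complex \<Rightarrow> bquat) \<Rightarrow> quat \<Rightarrow> quat" where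
  "slicefun G q = (let z = Complex (c0 q) (norm (qvec q));
                       J = (1 / norm (qvec q)) *\<^sub>R qvec q
                   in bre (G z) + hmul J (bim (G z)))"

text \<open>Holomorphic stem: F1 + i F2 holomorphic into H (x) C (componentwise), F1(conj z) = F1(z),
  F2(conj z) = - F2(z).\<close>
definition holo_stem :: "complex set \<Rightarrow> (complex \<Rightarrow> bquat) \<Rightarrow> bool" where
  "holo_stem D G \<longleftrightarrow>
     (\<lambda>z. c0 (G z)) holomorphic_on D \<and> (\<lambda>z. c1 (G z)) holomorphic_on D \<and>
     (\<lambda>z. c2 (G z)) holomorphic_on D \<and> (\<lambda>z. c3 (G z)) holomorphic_on D \<and>
     (\<forall>z\<in>D. G (cnj z) = bcnj (G z))"

definition is_stem :: "quat set \<Rightarrow> (complex \<Rightarrow> bquat) \<Rightarrow> (quat \<Rightarrow> quat) \<Rightarrow> bool" where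
  "is_stem \<Omega> G f \<longleftrightarrow> holo_stem (slice_dom \<Omega>) G \<and> (\<forall>q\<in>\<Omega>. f q = slicefun G q)"

definition slice_regular :: "quat set \<Rightarrow> (quat \<Rightarrow> quat) \<Rightarrow> bool" where
  "slice_regular \<Omega> f \<longleftrightarrow> (\<exists>G. is_stem \<Omega> G f)"

definition stem_of :: "quat set \<Rightarrow> (quat \<Rightarrow> quat) \<Rightarrow> complex \<Rightarrow> bquat" where
  "stem_of \<Omega> f = (SOME G. is_stem \<Omega> G f)"

text \<open>Slice-preserving: F1, F2 real valued.\<close>
definition slice_preserving :: "quat set \<Rightarrow> (quat \<Rightarrow> quat) \<Rightarrow> bool" where
  "slice_preserving \<Omega> f \<longleftrightarrow> (\<exists>G. is_stem \<Omega> G f \<and>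
      (\<forall>z\<in>slice_dom \<Omega>. c1 (G z) = 0 \<and> c2 (G z) = 0 \<and> c3 (G z) = 0))"

definition vectorial :: "quat set \<Rightarrow> (quat \<Rightarrow> quat) \<Rightarrow> bool" where
  "vectorial \<Omega> f \<longleftrightarrow> (\<exists>G. is_stem \<Omega> G f \<and> (\<forall>z\<in>slice_dom \<Omega>. c0 (G z) = 0))"

definition star :: "quat set \<Rightarrow> (quat \<Rightarrow> quat) \<Rightarrow> (quat \<Rightarrow> quat) \<Rightarrow> quat \<Rightarrow> quat" where
  "star \<Omega> f g = slicefun (\<lambda>z. hmul (stem_of \<Omega> f z) (stem_of \<Omega> g z))"

definition star_pow :: "quat set \<Rightarrow> (quat \<Rightarrow> quat) \<Rightarrow> nat \<Rightarrow> quat \<Rightarrow> quat" where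
  "star_pow \<Omega> f n = slicefun (\<lambda>z. hpow (stem_of \<Omega> f z) n)"

definition vect_part :: "quat set \<Rightarrow> (quat \<Rightarrow> quat) \<Rightarrow> quat \<Rightarrow> quat" where
  "vect_part \<Omega> f = slicefun (\<lambda>z. (0, c1 (stem_of \<Omega> f z), c2 (stem_of \<Omega> f z), c3 (stem_of \<Omega> f z)))"

definition symmetrization :: "quat set \<Rightarrow> (quat \<Rightarrow> quat) \<Rightarrow> quat \<Rightarrow> quat" where
  "symmetrization \<Omega> f = slicefun (\<lambda>z.
     ((c0 (stem_of \<Omega> f z))\<^sup>2 + (c1 (stem_of \<Omega> f z))\<^sup>2 + (c2 (stem_of \<Omega> f z))\<^sup>2
        + (c3 (stem_of \<Omega> f z))\<^sup>2, 0, 0, 0))"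

definition star_exp_is_one :: "quat set \<Rightarrow> (quat \<Rightarrow> quat) \<Rightarrow> bool" where
  "star_exp_is_one \<Omega> f \<longleftrightarrow>
     (\<forall>q\<in>\<Omega>. (\<lambda>n. (1 / fact n) *\<^sub>R star_pow \<Omega> f n q) sums hone)"

definition locally_dependent :: "quat set \<Rightarrow> (quat \<Rightarrow> quat) \<Rightarrow> (quat \<Rightarrow> quat) \<Rightarrow> bool" where
  "locally_dependent \<Omega> fv gv \<longleftrightarrow> (\<forall>p\<in>\<Omega>. \<exists>U. p \<in> U \<and> U \<subseteq> \<Omega> \<and> open U \<and> connected U \<and>
      axially_symmetric U \<and>
      (\<exists>\<alpha> \<beta>. slice_preserving U \<alpha> \<and> slice_preserving U \<beta> \<and>
         (\<exists>q\<in>U. \<alpha> q \<noteq> 0 \<or> \<beta> q \<noteq> 0) \<and>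
         (\<forall>q\<in>U. star U \<alpha> fv q + star U \<beta> gv q = 0)))"

definition SR_omega :: "quat set \<Rightarrow> (quat \<Rightarrow> quat) \<Rightarrow> (quat \<Rightarrow> quat) \<Rightarrow> bool" where
  "SR_omega \<Omega> gv f \<longleftrightarrow> slice_regular \<Omega> f \<and> locally_dependent \<Omega> (vect_part \<Omega> f) gv"

text \<open>Global sections over \<Omega> of K_omega (omega = [gv]): slice-regular f on \<Omega> which are
  (locally) in SR_omega and satisfy exp_*(f) = 1. Functions are only relevant on \<Omega>.\<close>
definition K_sections :: "quat set \<Rightarrow> (quat \<Rightarrow> quat) \<Rightarrow> (quat \<Rightarrow> quat) set" where
  "K_sections \<Omega> gv = {f. SR_omega \<Omega> gv f \<and> star_exp_is_one \<Omega> f}"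

definition minimal_representative :: "quat set \<Rightarrow> (quat \<Rightarrow> quat) \<Rightarrow> bool" where
  "minimal_representative \<Omega> gv \<longleftrightarrow> vectorial \<Omega> gv \<and>
     (\<forall>x. qof_real x \<in> \<Omega> \<longrightarrow> gv (qof_real x) \<noteq> 0) \<and>
     (\<forall>x y. y \<noteq> 0 \<longrightarrow> qof_real x + y *\<^sub>R qi \<in> \<Omega> \<longrightarrow>
         (\<exists>J\<in>\<SS>. gv (qof_real x + y *\<^sub>R J) \<noteq> 0))"

definition zero_set :: "quat set \<Rightarrow> (quat \<Rightarrow> quat) \<Rightarrow> quat set" where
  "zero_set \<Omega> gv = {q\<in>\<Omega>. gv q = 0}"

end

theory Submission
  imports Defs "HOL-Complex_Analysis.Conformal_Mappings"
begin

text \<open>Everything is transported to stems. Let G be the stem of g_v and H the (complex-valued)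
  stem of h, so that H^2 = G.G. For a section f with stem F, exp_*(f) = 1 means exp F = 1 in
  H \<otimes> C. Writing F = F_0 + v with v^2 = - v.v, this forces F_0 \<in> i \<pi> Z and v.v = (2 N \<pi>)^2
  pointwise; by continuity on the connected slice domain N is constant and F_0 = 0, since F_0 is
  real at real points. Local dependence of f_v on g_v makes the stems parallel (by the identity
  principle), so F = \<lambda> G with (\<lambda> H)^2 = (2 N \<pi>)^2.

  If g_v has no zeros, H does not vanish, so \<lambda> H / (2 N \<pi>) is a continuous sign, hence constant,
  and f = 2 n \<pi> h^-1 g_v. If g_v vanishes, then G.G vanishes at some point (a vector function
  vanishes somewhere on the sphere over z exactly when G(z) is isotropic), hence N = 0, F is
  nilpotent, and exp F = 1 + F gives F = 0.\<close>

section \<open>The algebra of quaternions and of H \<otimes> C\<close>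

text \<open>A point q = x + J y of H with y = |Im q| \<ge> 0 has slice coordinate x + i y and
  imaginary direction J (which is 0 for real q, as 1 / 0 = 0); an element P of H \<otimes> C is
  evaluated at J as Re P + J Im P, so that a slice function with stem F takes at q the value of
  F(x + i y) evaluated at J.\<close>

definition slice_coord :: "quat \<Rightarrow> complex" where
  "slice_coord q = Complex (c0 q) (norm (qvec q))"

definition imag_dir :: "quat \<Rightarrow> quat" where
  "imag_dir q = (1 / norm (qvec q)) *\<^sub>R qvec q"

definition unit_eval :: "quat \<Rightarrow> bquat \<Rightarrow> quat" where
  "unit_eval J P = bre P + hmul J (bim P)"

definition cscale :: "complex \<Rightarrow> bquat \<Rightarrow> bquat" where
  "cscale a p = (a * c0 p, a * c1 p, a * c2 p, a * c3 p)"

definition quat_of_complex :: "complex \<Rightarrow> quat" where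
  "quat_of_complex z = qof_real (Re z) + Im z *\<^sub>R qi"

lemmas quat_coords = c0_def c1_def c2_def c3_def

lemma quat_zero_tuple: "(0::quat) = (0,0,0,0)"
  by (simp add: zero_prod_def)

lemma bquat_zero_tuple: "(0::bquat) = (0,0,0,0)"
  by (simp add: zero_prod_def)

lemma slicefun_unit_eval: "slicefun G q = unit_eval (imag_dir q) (G (slice_coord q))"
  by (simp add: slicefun_def unit_eval_def imag_dir_def slice_coord_def Let_def)

lemma norm_quat_coords: "norm (q::quat) = sqrt ((c0 q)^2 + (c1 q)^2 + (c2 q)^2 + (c3 q)^2)"
  by (cases q) (simp add: norm_Pair quat_coords)

lemma imag_units_iff: "J \<in> \<SS> \<longleftrightarrow> (\<exists>b c d. J = (0,b,c,d) \<and> b^2 + c^2 + d^2 = 1)"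
proof
  assume J: "J \<in> \<SS>"
  obtain a b c d where Jd: "J = (a,b,c,d)" by (cases J) auto
  from J have e: "a*a - b*b - c*c - d*d = -1" "a*b + b*a = 0" "a*c + c*a = 0" "a*d + d*a = 0"
    unfolding imag_units_def Jd hmul_def hone_def by simp_all
  have "a = 0"
  proof (rule ccontr)
    assume "a \<noteq> 0"
    with e(2-4) have "b = 0" "c = 0" "d = 0" by (simp_all add: mult.commute)
    with e(1) have "a*a = -1" by simp
    then show False by (smt (verit) zero_le_square)
  qed
  with e(1) Jd show "\<exists>b c d. J = (0,b,c,d) \<and> b^2 + c^2 + d^2 = 1"
    by (simp add: power2_eq_square)
next
  assume "\<exists>b c d. J = (0,b,c,d) \<and> b^2 + c^2 + d^2 = 1"
  then obtain b c d where "J = (0,b,c,d)" "b^2 + c^2 + d^2 = 1" by blast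
  then show "J \<in> \<SS>" by (simp add: imag_units_def hmul_def hone_def power2_eq_square)
qed

lemma imag_unit_neg: "J \<in> \<SS> \<Longrightarrow> - J \<in> \<SS>"
  by (auto simp: imag_units_iff)

lemma qi_imag_unit: "qi \<in> \<SS>"
  by (auto simp: imag_units_iff qi_def)

lemma sum_squares_one_scale:
  "b^2 + c^2 + d^2 = 1 \<Longrightarrow> b * (b * z) + (c * (c * z) + d * (d * z)) = (z::real)"
proof -
  assume "b^2 + c^2 + d^2 = 1"
  moreover have "b * (b * z) + (c * (c * z) + d * (d * z)) = (b^2 + c^2 + d^2) * z"
    by (simp add: algebra_simps power2_eq_square)
  ultimately show ?thesis by simp
qed

lemma hmul_imag_unit_twice:
  assumes "J \<in> \<SS>"
  shows "hmul J (hmul J y) = - y"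
proof -
  obtain b c d where J: "J = (0,b,c,d)" "b^2 + c^2 + d^2 = 1"
    using assms imag_units_iff by auto
  obtain y0 y1 y2 y3 where y: "y = (y0,y1,y2,y3)" by (cases y) auto
  show ?thesis
    unfolding J(1) y
    apply (simp add: hmul_def)
    apply (simp add: algebra_simps sum_squares_one_scale[OF J(2)])
    done
qed

lemma hmul_zero_right [simp]: "hmul J (0::quat) = 0"
  and hmul_zero_left [simp]: "hmul (0::quat) J = 0"
  by (cases J; simp add: hmul_def quat_zero_tuple)+

lemma hmul_add_right: "hmul J ((x::quat) + y) = hmul J x + hmul J y"
  by (cases J; cases x; cases y) (simp add: hmul_def algebra_simps)

lemma hmul_diff_right: "hmul J ((x::quat) - y) = hmul J x - hmul J y"
  by (cases J; cases x; cases y) (simp add: hmul_def algebra_simps)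

lemma hmul_uminus_left: "hmul (- J) (x::quat) = - hmul J x"
  by (cases J; cases x) (simp add: hmul_def algebra_simps)

lemma hmul_scaleR_right: "hmul J (r *\<^sub>R (x::quat)) = r *\<^sub>R hmul J x"
  by (cases J; cases x) (simp add: hmul_def algebra_simps)

lemma hmul_imag_unit_eq_zero: "J \<in> \<SS> \<Longrightarrow> hmul J y = 0 \<Longrightarrow> (y::quat) = 0"
  using hmul_imag_unit_twice[of J y] by simp

lemma bquat_eqI: "bre P = bre Q \<Longrightarrow> bim P = bim Q \<Longrightarrow> P = Q"
  by (cases P; cases Q) (simp add: bre_def bim_def quat_coords complex_eq_iff)

lemma bre_add: "bre (P + Q) = bre P + bre Q"
  and bim_add: "bim (P + Q) = bim P + bim Q"
  and bre_scaleR: "bre (r *\<^sub>R P) = r *\<^sub>R bre P"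
  and bim_scaleR: "bim (r *\<^sub>R P) = r *\<^sub>R bim P"
  by (cases P; cases Q; simp add: bre_def bim_def quat_coords)+

lemma bre_zero [simp]: "bre 0 = 0" and bim_zero [simp]: "bim 0 = 0"
  by (simp_all add: bre_def bim_def quat_coords quat_zero_tuple bquat_zero_tuple)

lemma unit_eval_add: "unit_eval J (P + Q) = unit_eval J P + unit_eval J Q"
  by (simp add: unit_eval_def bre_add bim_add hmul_add_right)

lemma unit_eval_scaleR: "unit_eval J (r *\<^sub>R P) = r *\<^sub>R unit_eval J P"
  by (simp add: unit_eval_def bre_scaleR bim_scaleR hmul_scaleR_right scaleR_add_right)

lemma unit_eval_zero [simp]: "unit_eval J 0 = 0"
  by (simp add: unit_eval_def)

lemma unit_eval_hone: "unit_eval J hone = hone"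
  by (simp add: unit_eval_def hone_def bre_def bim_def quat_coords flip: quat_zero_tuple)

lemma unit_eval_cscale:
  assumes "J \<in> \<SS>"
  shows "unit_eval J (cscale a X) = hmul (unit_eval J (a,0,0,0)) (unit_eval J X)"
proof -
  obtain b c d where J: "J = (0,b,c,d)" "b^2 + c^2 + d^2 = 1"
    using assms imag_units_iff by auto
  obtain x0 x1 x2 x3 where X: "X = (x0,x1,x2,x3)" by (cases X) auto
  show ?thesis
    unfolding J(1) X
    apply (simp add: unit_eval_def cscale_def hmul_def bre_def bim_def quat_coords)
    apply (simp add: algebra_simps sum_squares_one_scale[OF J(2)])
    done
qed

lemma unit_eval_zero_cscale:
  "Im a = 0 \<Longrightarrow> unit_eval 0 (cscale a X) = hmul (unit_eval 0 (a,0,0,0)) (unit_eval 0 X)"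
  by (cases X) (simp add: unit_eval_def cscale_def hmul_def bre_def bim_def quat_coords quat_zero_tuple)

lemma sum_diff_eq_zero:
  fixes x y :: "'a::real_vector"
  assumes "x + y = 0" "x - y = 0"
  shows "x = 0" "y = 0"
proof -
  from assms have "2 *\<^sub>R y = 0" by (simp add: scaleR_2)
  then show "y = 0" by simp
  with assms(2) show "x = 0" by simp
qed

lemma unit_eval_opposite_inj:
  assumes "J \<in> \<SS>" "unit_eval J P = unit_eval J Q" "unit_eval (-J) P = unit_eval (-J) Q"
  shows "P = Q"
proof -
  have "(bre P - bre Q) + hmul J (bim P - bim Q) = 0"
    using assms(2) by (simp add: unit_eval_def hmul_diff_right algebra_simps)
  moreover have "(bre P - bre Q) - hmul J (bim P - bim Q) = 0"
    using assms(3) by (simp add: unit_eval_def hmul_diff_right hmul_uminus_left algebra_simps)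
  ultimately have "bre P - bre Q = 0" "hmul J (bim P - bim Q) = 0"
    by (rule sum_diff_eq_zero)+
  moreover from this have "bim P - bim Q = 0"
    using hmul_imag_unit_eq_zero[OF assms(1)] by blast
  ultimately show ?thesis by (intro bquat_eqI) auto
qed

lemma bcnj_hmul: "bcnj (hmul P Q) = hmul (bcnj P) (bcnj Q)"
  by (cases P; cases Q) (simp add: bcnj_def hmul_def quat_coords)

lemma bcnj_add: "bcnj (P + Q) = bcnj P + bcnj Q"
  by (cases P; cases Q) (simp add: bcnj_def quat_coords)

lemma bcnj_zero [simp]: "bcnj 0 = 0"
  by (simp add: bcnj_def quat_coords bquat_zero_tuple)

lemma bcnj_cscale: "bcnj (cscale a P) = cscale (cnj a) (bcnj P)"
  by (cases P) (simp add: bcnj_def cscale_def quat_coords)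

lemma bcnj_tuple: "bcnj (a,b,c,d) = (cnj a, cnj b, cnj c, cnj d)"
  by (simp add: bcnj_def quat_coords)

lemma coords_bcnj:
  "c0 (bcnj P) = cnj (c0 P)" "c1 (bcnj P) = cnj (c1 P)"
  "c2 (bcnj P) = cnj (c2 P)" "c3 (bcnj P) = cnj (c3 P)"
  by (simp_all add: bcnj_def quat_coords)

lemma unit_eval_zero_real:
  assumes "bcnj P = P"
  shows "unit_eval 0 P = bre P" "bim P = 0"
proof -
  obtain a b c d where P: "P = (a,b,c,d)" by (cases P) auto
  from assms have "Im a = 0" "Im b = 0" "Im c = 0" "Im d = 0"
    by (auto simp: P bcnj_def quat_coords complex_eq_iff)
  then show "bim P = 0" by (simp add: bim_def P quat_coords quat_zero_tuple)
  then show "unit_eval 0 P = bre P" by (simp add: unit_eval_def)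
qed

lemma hmul_scalar_left: "hmul (a,0,0,0) (P::bquat) = cscale a P"
  by (cases P) (simp add: hmul_def cscale_def quat_coords)

section \<open>Slice coordinates\<close>

lemma qvec_eq_0_real: "qvec q = 0 \<Longrightarrow> q = qof_real (c0 q)"
  by (cases q) (simp add: qvec_def qof_real_def quat_coords quat_zero_tuple)

lemma slice_coord_real [simp]: "slice_coord (qof_real x) = complex_of_real x"
  by (simp add: slice_coord_def qof_real_def qvec_def quat_coords complex_eq_iff quat_zero_tuple)

lemma imag_dir_real [simp]: "imag_dir (qof_real x) = 0"
  by (simp add: imag_dir_def qof_real_def qvec_def quat_coords quat_zero_tuple)

lemma imag_dir_imag_unit:
  assumes "qvec q \<noteq> 0"
  shows "imag_dir q \<in> \<SS>"
proof -
  define n where "n = norm (qvec q)"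
  have n: "n > 0" using assms by (simp add: n_def)
  have nn: "n^2 = (c1 q)^2 + (c2 q)^2 + (c3 q)^2"
    by (simp add: n_def norm_quat_coords qvec_def quat_coords)
  have "imag_dir q = (0, c1 q / n, c2 q / n, c3 q / n)"
    by (simp add: imag_dir_def n_def qvec_def)
  moreover have "(c1 q / n)^2 + (c2 q / n)^2 + (c3 q / n)^2 = 1"
    using n by (simp add: power_divide add_divide_distrib[symmetric] flip: nn)
  ultimately show ?thesis by (auto simp: imag_units_iff)
qed

lemma quat_slice_decomp: "q = qof_real (c0 q) + norm (qvec q) *\<^sub>R imag_dir q"
proof (cases "qvec q = 0")
  case True
  then show ?thesis using qvec_eq_0_real by (simp add: imag_dir_def)
next
  case False
  then have "norm (qvec q) *\<^sub>R imag_dir q = qvec q" by (simp add: imag_dir_def)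
  then show ?thesis by (cases q) (simp add: qvec_def qof_real_def quat_coords)
qed

lemma
  assumes "J \<in> \<SS>" "y > 0"
  shows slice_coord_slice: "slice_coord (qof_real x + y *\<^sub>R J) = Complex x y"
    and imag_dir_slice: "imag_dir (qof_real x + y *\<^sub>R J) = J"
proof -
  obtain b c d where J: "J = (0,b,c,d)" "b^2 + c^2 + d^2 = 1"
    using assms(1) imag_units_iff by auto
  have v: "qvec (qof_real x + y *\<^sub>R J) = y *\<^sub>R J"
    by (simp add: J qvec_def qof_real_def quat_coords)
  have nJ: "norm J = 1" using J by (simp add: norm_quat_coords quat_coords)
  have n: "norm (qvec (qof_real x + y *\<^sub>R J)) = y" using assms(2) nJ by (simp add: v)
  show "slice_coord (qof_real x + y *\<^sub>R J) = Complex x y"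
    by (simp add: slice_coord_def n) (simp add: J qof_real_def quat_coords)
  show "imag_dir (qof_real x + y *\<^sub>R J) = J"
    using assms(2) by (simp add: imag_dir_def n v nJ)
qed

lemma axially_symmetricD:
  "axially_symmetric U \<Longrightarrow> I \<in> \<SS> \<Longrightarrow> J \<in> \<SS> \<Longrightarrow>
     qof_real x + y *\<^sub>R I \<in> U \<Longrightarrow> qof_real x + y *\<^sub>R J \<in> U"
  unfolding axially_symmetric_def by blast

lemma axially_symmetric_rotate:
  assumes "axially_symmetric U" "q \<in> U" "qvec q \<noteq> 0" "J \<in> \<SS>"
  shows "qof_real (c0 q) + norm (qvec q) *\<^sub>R J \<in> U"
  using axially_symmetricD[OF assms(1) imag_dir_imag_unit[OF assms(3)] assms(4)]
    quat_slice_decomp[of q] assms(2) by simp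

lemma slice_dom_iff: "z \<in> slice_dom U \<longleftrightarrow> quat_of_complex z \<in> U"
  by (simp add: slice_dom_def quat_of_complex_def)

lemma slice_coord_in_slice_dom:
  assumes "axially_symmetric U" "q \<in> U"
  shows "slice_coord q \<in> slice_dom U"
proof (cases "qvec q = 0")
  case True
  then have "quat_of_complex (slice_coord q) = q"
    using qvec_eq_0_real by (simp add: quat_of_complex_def slice_coord_def)
  with assms show ?thesis by (simp add: slice_dom_iff)
next
  case False
  then show ?thesis using axially_symmetric_rotate[OF assms False qi_imag_unit]
    by (simp add: slice_dom_iff quat_of_complex_def slice_coord_def)
qed

lemma slice_dom_cnj:
  assumes "axially_symmetric U" "z \<in> slice_dom U"
  shows "cnj z \<in> slice_dom U"
proof -
  have "qof_real (Re z) + Im z *\<^sub>R qi \<in> U" using assms(2) by (simp add: slice_dom_def)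
  then have "qof_real (Re z) + Im z *\<^sub>R (- qi) \<in> U"
    using axially_symmetricD[OF assms(1) qi_imag_unit imag_unit_neg[OF qi_imag_unit]] by blast
  then show ?thesis by (simp add: slice_dom_def)
qed

lemma slice_dom_mono: "U \<subseteq> \<Omega> \<Longrightarrow> slice_dom U \<subseteq> slice_dom \<Omega>"
  by (auto simp: slice_dom_def)

lemma slice_coord_quat_of_complex: "Im z \<ge> 0 \<Longrightarrow> slice_coord (quat_of_complex z) = z"
  by (simp add: slice_coord_def quat_of_complex_def qvec_def qof_real_def qi_def quat_coords
      complex_eq_iff norm_quat_coords quat_zero_tuple)

lemma continuous_on_slice_coord: "continuous_on S slice_coord"
  unfolding slice_coord_def Complex_eq qvec_def quat_coords by (intro continuous_intros)

lemma open_slice_dom: "open U \<Longrightarrow> open (slice_dom U)"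
proof -
  assume U: "open U"
  have "continuous_on UNIV quat_of_complex"
    unfolding quat_of_complex_def qof_real_def qi_def by (intro continuous_intros)
  moreover have "slice_dom U = UNIV \<inter> quat_of_complex -` U" by (auto simp: slice_dom_iff)
  ultimately show ?thesis using continuous_open_preimage[OF _ open_UNIV U] by simp
qed

section \<open>Stems of slice functions\<close>

text \<open>On an axially symmetric set a slice function determines its stem: F(x + iy) is
  recovered from the values at x + y i and x - y i, and F(x - iy) from F(x + iy) by the
  conjugation symmetry.\<close>
lemma stem_unique:
  assumes U: "axially_symmetric U"
    and sym1: "\<forall>z\<in>slice_dom U. K1 (cnj z) = bcnj (K1 z)"
    and sym2: "\<forall>z\<in>slice_dom U. K2 (cnj z) = bcnj (K2 z)"
    and eq: "\<forall>q\<in>U. slicefun K1 q = slicefun K2 q"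
    and z: "z \<in> slice_dom U"
  shows "K1 z = K2 z"
proof -
  have upper: "K1 w = K2 w" if w: "w \<in> slice_dom U" "Im w \<ge> 0" for w
  proof (cases "Im w = 0")
    case True
    have q: "qof_real (Re w) \<in> U" using w(1) True by (simp add: slice_dom_def)
    have wr: "w = complex_of_real (Re w)" using True by (simp add: complex_eq_iff)
    have r1: "bcnj (K1 w) = K1 w" and r2: "bcnj (K2 w) = K2 w"
      using sym1 sym2 w(1) by (metis complex_cnj_complex_of_real wr)+
    have "slicefun K1 (qof_real (Re w)) = slicefun K2 (qof_real (Re w))" using eq q by blast
    then have "unit_eval 0 (K1 w) = unit_eval 0 (K2 w)"
      by (simp add: slicefun_unit_eval wr[symmetric])
    then show ?thesis
      using unit_eval_zero_real[OF r1] unit_eval_zero_real[OF r2] bquat_eqI by metis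
  next
    case False
    then have y: "Im w > 0" using w(2) by simp
    have at_unit: "unit_eval J (K1 w) = unit_eval J (K2 w)" if J: "J \<in> \<SS>" for J
    proof -
      have "qof_real (Re w) + Im w *\<^sub>R J \<in> U"
        using w(1) axially_symmetricD[OF U qi_imag_unit J] by (simp add: slice_dom_def)
      then have "slicefun K1 (qof_real (Re w) + Im w *\<^sub>R J) = slicefun K2 (qof_real (Re w) + Im w *\<^sub>R J)"
        using eq by blast
      then show ?thesis
        unfolding slicefun_unit_eval slice_coord_slice[OF J y] imag_dir_slice[OF J y] complex.collapse .
    qed
    show ?thesis
      using unit_eval_opposite_inj[OF qi_imag_unit at_unit[OF qi_imag_unit]
          at_unit[OF imag_unit_neg[OF qi_imag_unit]]] .
  qed
  show ?thesis
  proof (cases "Im z \<ge> 0")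
    case True
    then show ?thesis using upper z by blast
  next
    case False
    have cz: "cnj z \<in> slice_dom U" using slice_dom_cnj[OF U z] .
    with False upper have "K1 (cnj z) = K2 (cnj z)" by simp
    moreover have "K1 z = bcnj (K1 (cnj z))" "K2 z = bcnj (K2 (cnj z))"
      using sym1 sym2 cz by (metis complex_cnj_cnj)+
    ultimately show ?thesis by simp
  qed
qed

lemma holo_stemD:
  assumes "holo_stem D G"
  shows "(\<lambda>z. c0 (G z)) holomorphic_on D" "(\<lambda>z. c1 (G z)) holomorphic_on D"
    "(\<lambda>z. c2 (G z)) holomorphic_on D" "(\<lambda>z. c3 (G z)) holomorphic_on D"
  using assms by (simp_all add: holo_stem_def)

lemma holo_stem_mono: "holo_stem D G \<Longrightarrow> D' \<subseteq> D \<Longrightarrow> holo_stem D' G"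
  unfolding holo_stem_def using holomorphic_on_subset by blast

lemma is_stem_holo: "is_stem U G f \<Longrightarrow> holo_stem (slice_dom U) G"
  by (simp add: is_stem_def)

lemma is_stem_cnj: "is_stem U G f \<Longrightarrow> z \<in> slice_dom U \<Longrightarrow> G (cnj z) = bcnj (G z)"
  by (simp add: is_stem_def holo_stem_def)

lemma is_stem_real:
  "is_stem U G f \<Longrightarrow> complex_of_real x \<in> slice_dom U \<Longrightarrow> bcnj (G (complex_of_real x)) = G (complex_of_real x)"
  by (metis complex_cnj_complex_of_real is_stem_cnj)

lemma is_stem_eval:
  "is_stem U G f \<Longrightarrow> q \<in> U \<Longrightarrow> f q = unit_eval (imag_dir q) (G (slice_coord q))"
  by (simp add: is_stem_def slicefun_unit_eval)

lemma is_stem_mono: "is_stem \<Omega> G f \<Longrightarrow> U \<subseteq> \<Omega> \<Longrightarrow> is_stem U G f"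
  unfolding is_stem_def using holo_stem_mono slice_dom_mono by blast

lemma
  assumes U: "axially_symmetric U" and G: "is_stem U G f"
  shows stem_of_is_stem: "is_stem U (stem_of U f) f"
    and stem_of_eq: "z \<in> slice_dom U \<Longrightarrow> stem_of U f z = G z"
proof -
  show S: "is_stem U (stem_of U f) f"
    unfolding stem_of_def using someI[of "\<lambda>G. is_stem U G f" G] G by simp
  show "stem_of U f z = G z" if z: "z \<in> slice_dom U"
  proof (rule stem_unique[OF U _ _ _ z])
    show "\<forall>z\<in>slice_dom U. stem_of U f (cnj z) = bcnj (stem_of U f z)"
      using S is_stem_cnj by blast
    show "\<forall>z\<in>slice_dom U. G (cnj z) = bcnj (G z)"
      using G is_stem_cnj by blast
    show "\<forall>q\<in>U. slicefun (stem_of U f) q = slicefun G q"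
      using S G by (simp add: is_stem_def)
  qed
qed

lemma slicefun_cong:
  assumes "axially_symmetric U" "q \<in> U" "\<forall>z\<in>slice_dom U. K1 z = K2 z"
  shows "slicefun K1 q = slicefun K2 q"
  using assms slice_coord_in_slice_dom by (simp add: slicefun_unit_eval)

lemma star_unit_eval:
  assumes U: "axially_symmetric U" and A: "is_stem U A a" and G: "is_stem U G g" and q: "q \<in> U"
  shows "star U a g q = unit_eval (imag_dir q) (hmul (A (slice_coord q)) (G (slice_coord q)))"
  using stem_of_eq[OF U A] stem_of_eq[OF U G] slice_coord_in_slice_dom[OF U q]
  by (simp add: star_def slicefun_unit_eval)

lemma star_pow_unit_eval:
  assumes U: "axially_symmetric U" and G: "is_stem U G f" and q: "q \<in> U"
  shows "star_pow U f n q = unit_eval (imag_dir q) (hpow (G (slice_coord q)) n)"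
  using stem_of_eq[OF U G] slice_coord_in_slice_dom[OF U q]
  by (simp add: star_pow_def slicefun_unit_eval)

definition bvec :: "bquat \<Rightarrow> bquat" where
  "bvec P = (0, c1 P, c2 P, c3 P)"

lemma vect_part_stem:
  assumes U: "axially_symmetric U" and G: "is_stem U G f"
  shows "is_stem U (\<lambda>z. bvec (G z)) (vect_part U f)"
proof -
  have "holo_stem (slice_dom U) (\<lambda>z. bvec (G z))"
    using holo_stemD[OF is_stem_holo[OF G]] is_stem_cnj[OF G]
    by (simp add: holo_stem_def bvec_def quat_coords bcnj_def)
  moreover have "\<forall>q\<in>U. vect_part U f q = slicefun (\<lambda>z. bvec (G z)) q"
    unfolding vect_part_def bvec_def
    by (intro ballI slicefun_cong[OF U]) (auto simp: stem_of_eq[OF U G])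
  ultimately show ?thesis by (simp add: is_stem_def)
qed

lemma slice_preserving_stem:
  assumes "slice_preserving U \<alpha>"
  obtains A where "is_stem U A \<alpha>" "\<forall>z\<in>slice_dom U. A z = (c0 (A z), 0, 0, 0)"
proof -
  obtain A where "is_stem U A \<alpha>" "\<forall>z\<in>slice_dom U. c1 (A z) = 0 \<and> c2 (A z) = 0 \<and> c3 (A z) = 0"
    using assms by (auto simp: slice_preserving_def)
  moreover have "A z = (c0 (A z), 0, 0, 0)" if "c1 (A z) = 0 \<and> c2 (A z) = 0 \<and> c3 (A z) = 0" for z
    using that by (cases "A z") (simp add: quat_coords)
  ultimately show thesis using that by blast
qed

section \<open>The exponential in H \<otimes> C\<close>

text \<open>For G = g + v with g = c0 G scalar and v = bvec G, one has v * v = - vsq G; hence the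
  powers of G are G^n = a_n + b_n v, and G behaves like the complex number g + m with
  m^2 = - vsq G. Summing, exp G = A + B v with A + m B = exp (g + m) for both roots m.\<close>

definition vsq :: "bquat \<Rightarrow> complex" where
  "vsq G = (c1 G)^2 + (c2 G)^2 + (c3 G)^2"

fun hpow_coeffs :: "bquat \<Rightarrow> nat \<Rightarrow> complex \<times> complex" where
  "hpow_coeffs G 0 = (1, 0)"
| "hpow_coeffs G (Suc n) =
     (c0 G * fst (hpow_coeffs G n) - vsq G * snd (hpow_coeffs G n),
      fst (hpow_coeffs G n) + c0 G * snd (hpow_coeffs G n))"

lemma vsq_bcnj: "vsq (bcnj P) = cnj (vsq P)"
  by (simp add: vsq_def coords_bcnj)

lemma vsq_cscale: "vsq (cscale a X) = a^2 * vsq X"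
  by (simp add: cscale_def quat_coords vsq_def power_mult_distrib algebra_simps)

lemma hpow_eq_coeffs:
  "hpow G n = (fst (hpow_coeffs G n), snd (hpow_coeffs G n) * c1 G,
               snd (hpow_coeffs G n) * c2 G, snd (hpow_coeffs G n) * c3 G)"
proof (induction n)
  case 0
  then show ?case by (simp add: hone_def)
next
  case (Suc n)
  obtain g0 g1 g2 g3 where G: "G = (g0,g1,g2,g3)" by (cases G) auto
  show ?case
    using Suc by (simp add: G hmul_def quat_coords vsq_def algebra_simps power2_eq_square)
qed

lemma hpow_coeffs_root:
  assumes "m^2 = - vsq G"
  shows "fst (hpow_coeffs G n) + m * snd (hpow_coeffs G n) = (c0 G + m)^n"
proof (induction n)
  case 0
  then show ?case by simp
next
  case (Suc n)
  have "g * a - vsq G * b + m * (a + g * b) = (g + m) * (a + m * b)" for a b g :: complex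
    using assms by algebra
  with Suc show ?case by simp
qed

lemma hpow_coeffs_bound:
  fixes G :: bquat
  defines "K \<equiv> 1 + norm (c0 G) + norm (vsq G)"
  shows "norm (fst (hpow_coeffs G n)) \<le> K^n \<and> norm (snd (hpow_coeffs G n)) \<le> K^n"
proof (induction n)
  case 0
  then show ?case by simp
next
  case (Suc n)
  define a where "a = fst (hpow_coeffs G n)"
  define b where "b = snd (hpow_coeffs G n)"
  have a: "norm a \<le> K^n" and b: "norm b \<le> K^n" using Suc by (auto simp: a_def b_def)
  have K: "K^n \<ge> 0" by (simp add: K_def)
  have "norm (c0 G * a - vsq G * b) \<le> norm (c0 G) * norm a + norm (vsq G) * norm b"
    by (metis norm_mult norm_triangle_ineq4)
  also have "\<dots> \<le> norm (c0 G) * K^n + norm (vsq G) * K^n"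
    by (intro add_mono mult_left_mono a b) auto
  also have "\<dots> \<le> K^Suc n" using K by (simp add: K_def algebra_simps)
  finally have 1: "norm (c0 G * a - vsq G * b) \<le> K^Suc n" .
  have "norm (a + c0 G * b) \<le> norm a + norm (c0 G) * norm b"
    by (metis norm_mult norm_triangle_ineq)
  also have "\<dots> \<le> K^n + norm (c0 G) * K^n"
    by (intro add_mono mult_left_mono a b) auto
  also have "\<dots> \<le> K^Suc n" using K by (simp add: K_def algebra_simps)
  finally have 2: "norm (a + c0 G * b) \<le> K^Suc n" .
  show ?case using 1 2 by (simp add: a_def b_def)
qed

lemma summable_hpow_coeffs:
  "summable (\<lambda>n. fst (hpow_coeffs G n) /\<^sub>R fact n)"
  "summable (\<lambda>n. snd (hpow_coeffs G n) /\<^sub>R fact n)"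
proof -
  define K where "K = 1 + norm (c0 G) + norm (vsq G)"
  have K: "summable (\<lambda>n. K^n /\<^sub>R fact n)" by (rule summable_exp_generic)
  show "summable (\<lambda>n. fst (hpow_coeffs G n) /\<^sub>R fact n)"
  proof (rule summable_comparison_test[OF _ K], intro exI allI impI)
    show "norm (fst (hpow_coeffs G n) /\<^sub>R fact n) \<le> K^n /\<^sub>R fact n" for n
      using hpow_coeffs_bound[of G n] by (simp add: K_def divide_right_mono)
  qed
  show "summable (\<lambda>n. snd (hpow_coeffs G n) /\<^sub>R fact n)"
  proof (rule summable_comparison_test[OF _ K], intro exI allI impI)
    show "norm (snd (hpow_coeffs G n) /\<^sub>R fact n) \<le> K^n /\<^sub>R fact n" for n
      using hpow_coeffs_bound[of G n] by (simp add: K_def divide_right_mono)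
  qed
qed

definition bexp_scalar :: "bquat \<Rightarrow> complex" where
  "bexp_scalar G = (\<Sum>n. fst (hpow_coeffs G n) /\<^sub>R fact n)"

definition bexp_vec :: "bquat \<Rightarrow> complex" where
  "bexp_vec G = (\<Sum>n. snd (hpow_coeffs G n) /\<^sub>R fact n)"

definition bexp :: "bquat \<Rightarrow> bquat" where
  "bexp G = (bexp_scalar G, bexp_vec G * c1 G, bexp_vec G * c2 G, bexp_vec G * c3 G)"

lemma bexp_scalar_sums: "(\<lambda>n. fst (hpow_coeffs G n) /\<^sub>R fact n) sums bexp_scalar G"
  unfolding bexp_scalar_def using summable_hpow_coeffs(1) by (rule summable_sums)

lemma bexp_vec_sums: "(\<lambda>n. snd (hpow_coeffs G n) /\<^sub>R fact n) sums bexp_vec G"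
  unfolding bexp_vec_def using summable_hpow_coeffs(2) by (rule summable_sums)

lemma bexp_eq_hone_iff:
  "bexp G = hone \<longleftrightarrow>
     bexp_scalar G = 1 \<and> bexp_vec G * c1 G = 0 \<and> bexp_vec G * c2 G = 0 \<and> bexp_vec G * c3 G = 0"
  by (simp add: bexp_def hone_def)

lemma bexp_scalar_vec_root:
  assumes "m^2 = - vsq G"
  shows "bexp_scalar G + m * bexp_vec G = exp (c0 G + m)"
proof -
  have "(\<lambda>n. fst (hpow_coeffs G n) /\<^sub>R fact n + m * (snd (hpow_coeffs G n) /\<^sub>R fact n))
          sums (bexp_scalar G + m * bexp_vec G)"
    by (intro sums_add sums_mult bexp_scalar_sums bexp_vec_sums)
  moreover have "fst (hpow_coeffs G n) /\<^sub>R fact n + m * (snd (hpow_coeffs G n) /\<^sub>R fact n)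
                   = (c0 G + m)^n /\<^sub>R fact n" for n
  proof -
    have "fst (hpow_coeffs G n) /\<^sub>R fact n + m * (snd (hpow_coeffs G n) /\<^sub>R fact n)
        = (fst (hpow_coeffs G n) + m * snd (hpow_coeffs G n)) /\<^sub>R fact n"
      by (simp add: scaleR_add_right)
    then show ?thesis using hpow_coeffs_root[OF assms] by simp
  qed
  ultimately have "(\<lambda>n. (c0 G + m)^n /\<^sub>R fact n) sums (bexp_scalar G + m * bexp_vec G)"
    by simp
  then show ?thesis using exp_converges sums_unique2 by blast
qed

lemma unit_eval_coeffs:
  "unit_eval J (a, b*g1, b*g2, b*g3) =
     Re a *\<^sub>R unit_eval J (1,0,0,0) + Im a *\<^sub>R unit_eval J (\<i>,0,0,0)
     + Re b *\<^sub>R unit_eval J (0,g1,g2,g3) + Im b *\<^sub>R unit_eval J (0,\<i>*g1,\<i>*g2,\<i>*g3)"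
proof -
  have "(a, b*g1, b*g2, b*g3) = Re a *\<^sub>R (1,0,0,0) + Im a *\<^sub>R (\<i>,0,0,0)
     + Re b *\<^sub>R (0,g1,g2,g3) + Im b *\<^sub>R (0,\<i>*g1,\<i>*g2,\<i>*g3)"
    by (simp add: complex_eq_iff)
  then show ?thesis by (subst \<open>_ = _\<close>) (simp only: unit_eval_add unit_eval_scaleR)
qed

lemma sums_unit_eval_hpow:
  "(\<lambda>n. (1 / fact n) *\<^sub>R unit_eval J (hpow G n)) sums unit_eval J (bexp G)"
proof -
  define E1 where "E1 = unit_eval J (1,0,0,0)"
  define E2 where "E2 = unit_eval J (\<i>,0,0,0)"
  define E3 where "E3 = unit_eval J (0, c1 G, c2 G, c3 G)"
  define E4 where "E4 = unit_eval J (0,\<i>*c1 G,\<i>*c2 G,\<i>*c3 G)"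
  have E: "unit_eval J (a, b * c1 G, b * c2 G, b * c3 G)
      = Re a *\<^sub>R E1 + Im a *\<^sub>R E2 + Re b *\<^sub>R E3 + Im b *\<^sub>R E4" for a b
    unfolding E1_def E2_def E3_def E4_def by (rule unit_eval_coeffs)
  have "(\<lambda>n. Re (fst (hpow_coeffs G n) /\<^sub>R fact n) *\<^sub>R E1 + Im (fst (hpow_coeffs G n) /\<^sub>R fact n) *\<^sub>R E2
      + Re (snd (hpow_coeffs G n) /\<^sub>R fact n) *\<^sub>R E3 + Im (snd (hpow_coeffs G n) /\<^sub>R fact n) *\<^sub>R E4)
     sums (Re (bexp_scalar G) *\<^sub>R E1 + Im (bexp_scalar G) *\<^sub>R E2
      + Re (bexp_vec G) *\<^sub>R E3 + Im (bexp_vec G) *\<^sub>R E4)"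
    by (intro sums_add sums_scaleR_left sums_Re sums_Im bexp_scalar_sums bexp_vec_sums)
  moreover have "(\<lambda>n. Re (fst (hpow_coeffs G n) /\<^sub>R fact n) *\<^sub>R E1 + Im (fst (hpow_coeffs G n) /\<^sub>R fact n) *\<^sub>R E2
      + Re (snd (hpow_coeffs G n) /\<^sub>R fact n) *\<^sub>R E3 + Im (snd (hpow_coeffs G n) /\<^sub>R fact n) *\<^sub>R E4)
     = (\<lambda>n. (1 / fact n) *\<^sub>R unit_eval J (hpow G n))"
    by (rule ext) (simp only: hpow_eq_coeffs E, simp add: scaleR_add_right inverse_eq_divide)
  ultimately show ?thesis by (simp add: bexp_def E)
qed

lemma hpow_coeffs_bcnj:
  "hpow_coeffs (bcnj G) n = (cnj (fst (hpow_coeffs G n)), cnj (snd (hpow_coeffs G n)))"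
  by (induction n) (simp_all add: coords_bcnj vsq_bcnj)

lemma bexp_bcnj: "bexp (bcnj G) = bcnj (bexp G)"
proof -
  have "(\<lambda>n. fst (hpow_coeffs (bcnj G) n) /\<^sub>R fact n) sums cnj (bexp_scalar G)"
    using sums_cnj[THEN iffD2, OF bexp_scalar_sums[of G]] by (simp add: hpow_coeffs_bcnj)
  then have a: "bexp_scalar (bcnj G) = cnj (bexp_scalar G)"
    using bexp_scalar_sums sums_unique2 by blast
  have "(\<lambda>n. snd (hpow_coeffs (bcnj G) n) /\<^sub>R fact n) sums cnj (bexp_vec G)"
    using sums_cnj[THEN iffD2, OF bexp_vec_sums[of G]] by (simp add: hpow_coeffs_bcnj)
  then have b: "bexp_vec (bcnj G) = cnj (bexp_vec G)"
    using bexp_vec_sums sums_unique2 by blast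
  show ?thesis by (simp add: bexp_def a b coords_bcnj bcnj_tuple)
qed

lemma star_exp_is_one_iff:
  assumes U: "axially_symmetric U" and F: "is_stem U F f"
  shows "star_exp_is_one U f \<longleftrightarrow> (\<forall>z\<in>slice_dom U. bexp (F z) = hone)"
proof -
  have series: "(\<lambda>n. (1 / fact n) *\<^sub>R star_pow U f n q) sums slicefun (\<lambda>z. bexp (F z)) q"
    if "q \<in> U" for q
    using sums_unit_eval_hpow star_pow_unit_eval[OF U F that] by (simp add: slicefun_unit_eval)
  show ?thesis
  proof
    assume E: "star_exp_is_one U f"
    show "\<forall>z\<in>slice_dom U. bexp (F z) = hone"
    proof
      fix z assume z: "z \<in> slice_dom U"
      show "bexp (F z) = hone"
      proof (rule stem_unique[OF U _ _ _ z])
        show "\<forall>z\<in>slice_dom U. bexp (F (cnj z)) = bcnj (bexp (F z))"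
          using is_stem_cnj[OF F] bexp_bcnj by simp
        show "\<forall>z\<in>slice_dom U. hone = bcnj hone"
          by (simp add: hone_def bcnj_tuple)
        show "\<forall>q\<in>U. slicefun (\<lambda>z. bexp (F z)) q = slicefun (\<lambda>_. hone) q"
        proof
          fix q assume q: "q \<in> U"
          have "(\<lambda>n. (1 / fact n) *\<^sub>R star_pow U f n q) sums hone"
            using E q by (simp add: star_exp_is_one_def)
          then show "slicefun (\<lambda>z. bexp (F z)) q = slicefun (\<lambda>_. hone) q"
            using sums_unique2[OF series[OF q]] by (simp add: slicefun_unit_eval unit_eval_hone)
        qed
      qed
    qed
  next
    assume "\<forall>z\<in>slice_dom U. bexp (F z) = hone"
    then show "star_exp_is_one U f"
      using series slice_coord_in_slice_dom[OF U]
      by (simp add: star_exp_is_one_def slicefun_unit_eval unit_eval_hone)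
  qed
qed
section \<open>Solutions of exp G = 1 in H \<otimes> C\<close>

lemma bexp_eq_hone_exp:
  assumes G: "bexp G = hone" and m: "m^2 = - vsq G"
  shows "exp (c0 G + m) = 1" "exp (c0 G - m) = 1"
proof -
  have A: "bexp_scalar G = 1" and B: "bexp_vec G * c1 G = 0" "bexp_vec G * c2 G = 0" "bexp_vec G * c3 G = 0"
    using G by (simp_all add: bexp_eq_hone_iff)
  have mm: "(-m)^2 = - vsq G" using m by simp
  have "exp (c0 G + m) = 1 \<and> exp (c0 G - m) = 1"
  proof (cases "bexp_vec G = 0")
    case True
    then show ?thesis using bexp_scalar_vec_root[OF m] bexp_scalar_vec_root[OF mm] A by simp
  next
    case False
    with B have "vsq G = 0" by (simp add: vsq_def)
    with m have "m = 0" by simp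
    then show ?thesis using bexp_scalar_vec_root[OF m] A by simp
  qed
  then show "exp (c0 G + m) = 1" "exp (c0 G - m) = 1" by auto
qed

lemma bexp_eq_hone_scalar:
  assumes "bexp G = hone"
  obtains k :: int where "c0 G = \<i> * complex_of_real (of_int k * pi)"
proof -
  define m where "m = csqrt (- vsq G)"
  have m: "m^2 = - vsq G" by (simp add: m_def)
  have "exp (c0 G + m) * exp (c0 G - m) = 1" using bexp_eq_hone_exp[OF assms m] by simp
  then have "exp (2 * c0 G) = 1" by (simp flip: exp_add)
  then obtain k :: int where "Re (2 * c0 G) = 0" "Im (2 * c0 G) = of_int (2 * k) * pi"
    unfolding exp_eq_1 by blast
  then have "c0 G = \<i> * complex_of_real (of_int k * pi)" by (simp add: complex_eq_iff)
  then show thesis by (rule that)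
qed

lemma bexp_eq_hone_vsq:
  assumes "bexp G = hone" "c0 G = 0"
  obtains j :: int where "vsq G = (complex_of_real (2 * of_int j * pi))^2"
proof -
  define m where "m = csqrt (- vsq G)"
  have m: "m^2 = - vsq G" by (simp add: m_def)
  have "exp m = 1" using bexp_eq_hone_exp(1)[OF assms(1) m] assms(2) by simp
  then obtain j :: int where "Re m = 0" "Im m = of_int (2 * j) * pi"
    unfolding exp_eq_1 by blast
  then have "m = \<i> * complex_of_real (2 * of_int j * pi)" by (simp add: complex_eq_iff)
  with m have "vsq G = (complex_of_real (2 * of_int j * pi))^2" by (simp add: power_mult_distrib)
  then show thesis by (rule that)
qed

lemma bexp_vec_nilpotent:
  assumes "c0 G = 0" "vsq G = 0"
  shows "bexp_vec G = 1"
proof -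
  have vanish: "hpow_coeffs G (Suc (Suc k)) = (0,0)" for k
    by (induction k) (simp_all add: assms)
  have "snd (hpow_coeffs G n) /\<^sub>R fact n = (if n = 1 then 1 else 0)" for n
  proof (cases n)
    case (Suc k)
    then show ?thesis using vanish assms by (cases k) simp_all
  qed simp
  then have "(\<lambda>n. snd (hpow_coeffs G n) /\<^sub>R fact n) sums 1"
    using sums_single[of 1 "\<lambda>_. (1::complex)"] by simp
  then show ?thesis using bexp_vec_sums sums_unique2 by blast
qed

lemma bexp_eq_hone_nilpotent:
  assumes "bexp G = hone" "c0 G = 0" "vsq G = 0"
  shows "G = 0"
proof -
  have "c1 G = 0" "c2 G = 0" "c3 G = 0"
    using assms(1) bexp_vec_nilpotent[OF assms(2,3)] by (simp_all add: bexp_eq_hone_iff)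
  with assms(2) show ?thesis by (cases G) (simp add: quat_coords bquat_zero_tuple)
qed

text \<open>For n = 0 the hypothesis G = 0 is needed: a nonzero isotropic vector G has exp G = 1 + G.\<close>
lemma bexp_eq_hone_of_vsq:
  assumes g0: "c0 G = 0" and s: "vsq G = (complex_of_real (2 * of_int n * pi))^2"
    and nz: "n \<noteq> 0 \<or> G = 0"
  shows "bexp G = hone"
proof -
  define m where "m = \<i> * complex_of_real (2 * of_int n * pi)"
  have m2: "m^2 = - vsq G" and mm2: "(-m)^2 = - vsq G" by (simp_all add: m_def s power_mult_distrib)
  have "exp m = 1" "exp (-m) = 1"
    unfolding exp_eq_1 by (simp_all add: m_def) (rule exI[of _ "-n"], simp)
  then have "bexp_scalar G + m * bexp_vec G = 1" "bexp_scalar G - m * bexp_vec G = 1"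
    using bexp_scalar_vec_root[OF m2] bexp_scalar_vec_root[OF mm2] g0 by simp_all
  then have "(bexp_scalar G - 1) + m * bexp_vec G = 0" "(bexp_scalar G - 1) - m * bexp_vec G = 0"
    by (simp_all add: algebra_simps)
  then have "bexp_scalar G - 1 = 0" and mB: "m * bexp_vec G = 0"
    by (rule sum_diff_eq_zero)+
  then have A: "bexp_scalar G = 1" by simp
  show ?thesis
  proof (cases "n = 0")
    case False
    then have "bexp_vec G = 0" using mB by (simp add: m_def)
    then show ?thesis using A by (simp add: bexp_eq_hone_iff)
  next
    case True
    with nz A show ?thesis by (simp add: bexp_eq_hone_iff quat_coords bquat_zero_tuple)
  qed
qed

section \<open>Sections of K over a connected domain\<close>

lemma continuous_Ints_valued_constant:
  fixes \<phi> :: "'a::topological_space \<Rightarrow> complex"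
  assumes S: "connected S" and c: "continuous_on S \<phi>" and I: "\<forall>x\<in>S. \<phi> x \<in> \<int>"
    and x: "x \<in> S" and y: "y \<in> S"
  shows "\<phi> x = \<phi> y"
proof -
  have "\<phi> constant_on S"
  proof (rule continuous_discrete_range_constant[OF S c])
    fix x assume x: "x \<in> S"
    show "\<exists>e>0. \<forall>y. y \<in> S \<and> \<phi> y \<noteq> \<phi> x \<longrightarrow> e \<le> norm (\<phi> y - \<phi> x)"
    proof (intro exI[of _ 1] conjI allI impI)
      fix y assume y: "y \<in> S \<and> \<phi> y \<noteq> \<phi> x"
      obtain a where a: "\<phi> x = of_int a" using I x Ints_cases by metis
      obtain b where b: "\<phi> y = of_int b" using I y Ints_cases by metis
      from y a b have "1 \<le> \<bar>b - a\<bar>" by auto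
      with a b show "1 \<le> norm (\<phi> y - \<phi> x)"
        by (metis norm_of_int of_int_abs of_int_diff of_int_1_le_iff)
    qed simp
  qed
  with x y show ?thesis by (auto simp: constant_on_def)
qed

lemma is_stem_continuous_on:
  assumes U: "axially_symmetric U" and F: "is_stem U F f"
  shows "continuous_on (slice_coord ` U) (\<lambda>w. c0 (F w))"
    "continuous_on (slice_coord ` U) (\<lambda>w. c1 (F w))"
    "continuous_on (slice_coord ` U) (\<lambda>w. c2 (F w))"
    "continuous_on (slice_coord ` U) (\<lambda>w. c3 (F w))"
proof -
  have sub: "slice_coord ` U \<subseteq> slice_dom U" using slice_coord_in_slice_dom[OF U] by blast
  show "continuous_on (slice_coord ` U) (\<lambda>w. c0 (F w))"
    "continuous_on (slice_coord ` U) (\<lambda>w. c1 (F w))"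
    "continuous_on (slice_coord ` U) (\<lambda>w. c2 (F w))"
    "continuous_on (slice_coord ` U) (\<lambda>w. c3 (F w))"
    using holo_stemD[OF is_stem_holo[OF F]] holomorphic_on_imp_continuous_on
      continuous_on_subset[OF _ sub] by blast+
qed

text \<open>The locally constant integers read off from exp F = 1 are constant on the connected
  image of a slice domain, and the real points force the scalar part to vanish.\<close>

lemma real_slice_coord_stem:
  assumes U: "axially_symmetric U" and x0: "qof_real x0 \<in> U" and F: "is_stem U F f"
  shows "bcnj (F (complex_of_real x0)) = F (complex_of_real x0)"
  using is_stem_real[OF F] slice_coord_in_slice_dom[OF U x0] by simp

lemma bexp_hone_scalar_zero:
  assumes U: "axially_symmetric U" and conn: "connected U" and x0: "qof_real x0 \<in> U"
    and F: "is_stem U F f" and E: "\<forall>z\<in>slice_dom U. bexp (F z) = hone"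
  shows "\<forall>w\<in>slice_coord ` U. c0 (F w) = 0"
proof
  define S where "S = slice_coord ` U"
  define \<phi> where "\<phi> w = c0 (F w) / (\<i> * complex_of_real pi)" for w
  have w0: "complex_of_real x0 \<in> S" using imageI[OF x0, of slice_coord] by (simp add: S_def)
  have integer: "\<phi> w \<in> \<int>" and scalar: "c0 (F w) = \<phi> w * \<i> * complex_of_real pi"
    if "w \<in> S" for w
  proof -
    have "w \<in> slice_dom U" using that slice_coord_in_slice_dom[OF U] by (auto simp: S_def)
    then obtain k :: int where k: "c0 (F w) = \<i> * complex_of_real (of_int k * pi)"
      using bexp_eq_hone_scalar E by blast
    then have "\<phi> w = of_int k" by (simp add: \<phi>_def)
    then show "\<phi> w \<in> \<int>" "c0 (F w) = \<phi> w * \<i> * complex_of_real pi" using k by simp_all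
  qed
  have "connected S" unfolding S_def by (rule connected_continuous_image[OF continuous_on_slice_coord conn])
  moreover have "continuous_on S \<phi>"
    unfolding \<phi>_def S_def by (intro continuous_intros is_stem_continuous_on[OF U F]) simp
  ultimately have const: "\<phi> w = \<phi> (complex_of_real x0)" if "w \<in> S" for w
    by (rule continuous_Ints_valued_constant) (use integer that w0 in auto)
  have "cnj (c0 (F (complex_of_real x0))) = c0 (F (complex_of_real x0))"
    using real_slice_coord_stem[OF U x0 F] coords_bcnj(1) by metis
  then have "Im (c0 (F (complex_of_real x0))) = 0" by (simp add: complex_eq_iff)
  then have "\<phi> (complex_of_real x0) = 0"
    using scalar[OF w0] integer[OF w0] by (auto elim!: Ints_cases)
  then show "c0 (F w) = 0" if "w \<in> slice_coord ` U" for w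
    using scalar const that by (simp add: S_def)
qed

lemma bexp_hone_vsq_const:
  assumes U: "axially_symmetric U" and conn: "connected U" and x0: "qof_real x0 \<in> U"
    and F: "is_stem U F f" and E: "\<forall>z\<in>slice_dom U. bexp (F z) = hone"
    and scalar: "\<forall>w\<in>slice_coord ` U. c0 (F w) = 0"
  obtains N :: int where "\<forall>w\<in>slice_coord ` U. vsq (F w) = (complex_of_real (2 * of_int N * pi))^2"
proof -
  define S where "S = slice_coord ` U"
  define \<psi> where "\<psi> w = vsq (F w) / (complex_of_real (2 * pi))^2" for w
  have w0: "complex_of_real x0 \<in> S" using imageI[OF x0, of slice_coord] by (simp add: S_def)
  have sq: "\<exists>j::int. vsq (F w) = (complex_of_real (2 * of_int j * pi))^2" if "w \<in> S" for w
  proof -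
    have "w \<in> slice_dom U" using that slice_coord_in_slice_dom[OF U] by (auto simp: S_def)
    then show ?thesis using bexp_eq_hone_vsq E scalar that S_def by metis
  qed
  have integer: "\<psi> w \<in> \<int>" if w: "w \<in> S" for w
  proof -
    obtain j :: int where "vsq (F w) = (complex_of_real (2 * of_int j * pi))^2"
      using sq[OF w] by blast
    then have "\<psi> w = of_int (j^2)" by (simp add: \<psi>_def power_mult_distrib)
    then show "\<psi> w \<in> \<int>" by simp
  qed
  have "connected S" unfolding S_def by (rule connected_continuous_image[OF continuous_on_slice_coord conn])
  moreover have "continuous_on S \<psi>"
    unfolding \<psi>_def vsq_def S_def by (intro continuous_intros is_stem_continuous_on[OF U F]) simp
  ultimately have const: "\<psi> w = \<psi> (complex_of_real x0)" if "w \<in> S" for w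
    by (rule continuous_Ints_valued_constant) (use integer that w0 in auto)
  obtain N :: int where N: "vsq (F (complex_of_real x0)) = (complex_of_real (2 * of_int N * pi))^2"
    using sq[OF w0] by blast
  have "vsq (F w) = (complex_of_real (2 * of_int N * pi))^2" if w: "w \<in> S" for w
    using const[OF w] N by (simp add: \<psi>_def)
  then show thesis by (intro that[of N]) (simp add: S_def)
qed

section \<open>Local dependence as pointwise parallelism of stems\<close>

definition parallel :: "bquat \<Rightarrow> bquat \<Rightarrow> bool" where
  "parallel P Q \<longleftrightarrow> c2 P * c3 Q = c3 P * c2 Q \<and> c3 P * c1 Q = c1 P * c3 Q \<and> c1 P * c2 Q = c2 P * c1 Q"

lemma parallel_bvec_left [simp]: "parallel (bvec P) Q \<longleftrightarrow> parallel P Q"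
  by (simp add: parallel_def bvec_def quat_coords)

lemma cscale_one [simp]: "cscale 1 X = X"
  by (cases X) (simp add: cscale_def quat_coords)

lemma parallel_of_combination:
  assumes ab: "a \<noteq> 0 \<or> b \<noteq> 0" and rel: "cscale a P + cscale b Q = 0"
  shows "parallel P Q"
proof -
  have e: "a * c1 P + b * c1 Q = 0" "a * c2 P + b * c2 Q = 0" "a * c3 P + b * c3 Q = 0"
    using rel by (cases P; cases Q; simp add: cscale_def quat_coords bquat_zero_tuple)+
  have "a * (c2 P * c3 Q - c3 P * c2 Q) = 0" "b * (c2 P * c3 Q - c3 P * c2 Q) = 0"
    "a * (c3 P * c1 Q - c1 P * c3 Q) = 0" "b * (c3 P * c1 Q - c1 P * c3 Q) = 0"
    "a * (c1 P * c2 Q - c2 P * c1 Q) = 0" "b * (c1 P * c2 Q - c2 P * c1 Q) = 0"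
    using e by algebra+
  with ab show ?thesis by (auto simp: parallel_def)
qed

lemma parallel_identity_principle:
  assumes C: "open C" "connected C" and V: "holo_stem C V" and G: "holo_stem C G"
    and W: "open W" "W \<inter> C \<noteq> {}" "\<forall>z\<in>W \<inter> C. parallel (V z) (G z)" and z: "z \<in> C"
  shows "parallel (V z) (G z)"
proof -
  have vanish: "x z = 0" if "x holomorphic_on C" "\<forall>z\<in>W \<inter> C. x z = 0" for x
    using analytic_continuation_open[of "W \<inter> C" C x "\<lambda>_. 0"] that C W z by auto
  note holo = holo_stemD[OF V] holo_stemD[OF G]
  have "(\<lambda>z. c2 (V z) * c3 (G z) - c3 (V z) * c2 (G z)) z = 0"
    "(\<lambda>z. c3 (V z) * c1 (G z) - c1 (V z) * c3 (G z)) z = 0"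
    "(\<lambda>z. c1 (V z) * c2 (G z) - c2 (V z) * c1 (G z)) z = 0"
    by (rule vanish; use holo W(3) in \<open>auto intro!: holomorphic_intros simp: parallel_def\<close>)+
  then show ?thesis by (simp add: parallel_def)
qed

lemma star_relation_stems:
  assumes U: "axially_symmetric U"
    and A: "is_stem U A \<alpha>" "\<forall>z\<in>slice_dom U. A z = (c0 (A z), 0, 0, 0)"
    and B: "is_stem U B \<beta>" "\<forall>z\<in>slice_dom U. B z = (c0 (B z), 0, 0, 0)"
    and V: "is_stem U V fv" and G: "is_stem U G gv"
    and rel: "\<forall>q\<in>U. star U \<alpha> fv q + star U \<beta> gv q = 0"
    and z: "z \<in> slice_dom U"
  shows "cscale (c0 (A z)) (V z) + cscale (c0 (B z)) (G z) = 0"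
proof -
  define K where "K z = hmul (A z) (V z) + hmul (B z) (G z)" for z
  have "K z = 0"
  proof (rule stem_unique[OF U _ _ _ z])
    show "\<forall>z\<in>slice_dom U. K (cnj z) = bcnj (K z)"
      using is_stem_cnj[OF A(1)] is_stem_cnj[OF B(1)] is_stem_cnj[OF V] is_stem_cnj[OF G]
      by (simp add: K_def bcnj_add bcnj_hmul)
    show "\<forall>z\<in>slice_dom U. (\<lambda>_. 0::bquat) (cnj z) = bcnj 0"
      by simp
    show "\<forall>q\<in>U. slicefun K q = slicefun (\<lambda>_. 0) q"
      using rel star_unit_eval[OF U A(1) V] star_unit_eval[OF U B(1) G]
      by (simp add: slicefun_unit_eval K_def unit_eval_add)
  qed
  moreover obtain a b where "A z = (a,0,0,0)" "B z = (b,0,0,0)"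
    using A(2) B(2) z by blast
  ultimately show ?thesis by (simp add: K_def hmul_scalar_left quat_coords)
qed

lemma parallel_of_star_relation:
  assumes U: "axially_symmetric U" "open U" "connected U"
    and sp: "slice_preserving U \<alpha>" "slice_preserving U \<beta>" and nz: "\<exists>q\<in>U. \<alpha> q \<noteq> 0 \<or> \<beta> q \<noteq> 0"
    and V: "is_stem U V fv" and G: "is_stem U G gv"
    and rel: "\<forall>q\<in>U. star U \<alpha> fv q + star U \<beta> gv q = 0" and p: "p \<in> U"
  shows "parallel (V (slice_coord p)) (G (slice_coord p))"
proof -
  obtain A where A: "is_stem U A \<alpha>" "\<forall>z\<in>slice_dom U. A z = (c0 (A z), 0, 0, 0)"
    using slice_preserving_stem[OF sp(1)] by blast
  obtain B where B: "is_stem U B \<beta>" "\<forall>z\<in>slice_dom U. B z = (c0 (B z), 0, 0, 0)"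
    using slice_preserving_stem[OF sp(2)] by blast
  define W where "W = slice_dom U \<inter> (\<lambda>z. (c0 (A z), c0 (B z))) -` (- {(0,0)})"
  define C where "C = connected_component_set (slice_dom U) (slice_coord p)"
  have osd: "open (slice_dom U)" using open_slice_dom[OF U(2)] .
  have oW: "open W" unfolding W_def
  proof (rule continuous_open_preimage[OF _ osd])
    show "continuous_on (slice_dom U) (\<lambda>z. (c0 (A z), c0 (B z)))"
      using holo_stemD(1)[OF is_stem_holo[OF A(1)]] holo_stemD(1)[OF is_stem_holo[OF B(1)]]
      by (intro continuous_intros holomorphic_on_imp_continuous_on)
  qed auto
  have parW: "parallel (V z) (G z)" if w: "z \<in> W" for z
  proof -
    have z: "z \<in> slice_dom U" and ab: "c0 (A z) \<noteq> 0 \<or> c0 (B z) \<noteq> 0"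
      using w by (auto simp: W_def)
    show ?thesis using parallel_of_combination[OF ab star_relation_stems[OF U(1) A B V G rel z]] .
  qed
  have CU: "C \<subseteq> slice_dom U" by (simp add: C_def connected_component_subset)
  have imC: "slice_coord ` U \<subseteq> C" unfolding C_def
    by (rule connected_component_maximal)
      (use p slice_coord_in_slice_dom[OF U(1)] connected_continuous_image[OF continuous_on_slice_coord U(3)] in auto)
  obtain q1 where q1: "q1 \<in> U" "\<alpha> q1 \<noteq> 0 \<or> \<beta> q1 \<noteq> 0" using nz by blast
  have w1: "slice_coord q1 \<in> slice_dom U" using slice_coord_in_slice_dom[OF U(1) q1(1)] .
  obtain a b where ab: "A (slice_coord q1) = (a,0,0,0)" "B (slice_coord q1) = (b,0,0,0)"
    using A(2) B(2) w1 by blast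
  have "a \<noteq> 0 \<or> b \<noteq> 0"
    using q1(2) is_stem_eval[OF A(1) q1(1)] is_stem_eval[OF B(1) q1(1)] ab
    by (auto simp flip: bquat_zero_tuple)
  then have "slice_coord q1 \<in> W" using w1 ab by (simp add: W_def quat_coords)
  then have "W \<inter> C \<noteq> {}" using imC q1(1) by blast
  moreover have "holo_stem C V" "holo_stem C G"
    using is_stem_holo[OF V] is_stem_holo[OF G] CU by (blast intro: holo_stem_mono)+
  ultimately have "parallel (V z) (G z)" if "z \<in> C" for z
    using parallel_identity_principle[OF open_connected_component[OF osd] _ _ _ oW] parW that
    by (simp add: C_def)
  then show ?thesis using imC p by blast
qed

lemma locally_dependent_parallel:
  assumes \<Omega>: "axially_symmetric \<Omega>" and F: "is_stem \<Omega> F f" and G: "is_stem \<Omega> G gv"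
    and LD: "locally_dependent \<Omega> (vect_part \<Omega> f) gv" and p: "p \<in> \<Omega>"
  shows "parallel (F (slice_coord p)) (G (slice_coord p))"
proof -
  obtain U where HU: "p \<in> U \<and> U \<subseteq> \<Omega> \<and> open U \<and> connected U \<and> axially_symmetric U \<and>
      (\<exists>\<alpha> \<beta>. slice_preserving U \<alpha> \<and> slice_preserving U \<beta> \<and> (\<exists>q\<in>U. \<alpha> q \<noteq> 0 \<or> \<beta> q \<noteq> 0) \<and>
        (\<forall>q\<in>U. star U \<alpha> (vect_part \<Omega> f) q + star U \<beta> gv q = 0))"
    using bspec[OF LD[unfolded locally_dependent_def] p] ..
  then have pU: "p \<in> U" and UO: "U \<subseteq> \<Omega>" and U: "axially_symmetric U" "open U" "connected U"
    by simp_all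
  have "\<exists>\<alpha> \<beta>. slice_preserving U \<alpha> \<and> slice_preserving U \<beta> \<and> (\<exists>q\<in>U. \<alpha> q \<noteq> 0 \<or> \<beta> q \<noteq> 0) \<and>
      (\<forall>q\<in>U. star U \<alpha> (vect_part \<Omega> f) q + star U \<beta> gv q = 0)"
    using HU by (elim conjE)
  then obtain \<alpha> \<beta> where sp: "slice_preserving U \<alpha>" "slice_preserving U \<beta>"
    and nz: "\<exists>q\<in>U. \<alpha> q \<noteq> 0 \<or> \<beta> q \<noteq> 0"
    and rel: "\<forall>q\<in>U. star U \<alpha> (vect_part \<Omega> f) q + star U \<beta> gv q = 0"
    by blast
  have "parallel (bvec (F (slice_coord p))) (G (slice_coord p))"
    using parallel_of_star_relation[OF U sp nz is_stem_mono[OF vect_part_stem[OF \<Omega> F] UO]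
        is_stem_mono[OF G UO] rel pU] .
  then show ?thesis by simp
qed

lemma hone_stem: "is_stem U (\<lambda>z. hone) (\<lambda>q. hone)"
  by (simp add: is_stem_def holo_stem_def hone_def quat_coords bcnj_tuple slicefun_unit_eval
      unit_eval_hone[unfolded hone_def])

lemma locally_dependent_of_stems:
  assumes U: "axially_symmetric U" "open U" "connected U"
    and V: "is_stem U V fv" and G: "is_stem U G gv"
    and B: "is_stem U B \<beta>" "\<forall>z\<in>slice_dom U. B z = (c0 (B z),0,0,0)"
    and rel: "\<forall>z\<in>slice_dom U. V z + cscale (c0 (B z)) (G z) = 0"
  shows "locally_dependent U fv gv"
  unfolding locally_dependent_def
proof
  fix p assume p: "p \<in> U"
  have "slice_preserving U (\<lambda>q. hone)"
    unfolding slice_preserving_def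
  proof (intro exI conjI)
    show "is_stem U (\<lambda>z. hone) (\<lambda>q. hone)" by (rule hone_stem)
  qed (simp add: hone_def quat_coords)
  moreover have "slice_preserving U \<beta>"
    unfolding slice_preserving_def using B by (metis c1_def c2_def c3_def fst_conv snd_conv)
  moreover have "star U (\<lambda>q. hone) fv q + star U \<beta> gv q = 0" if q: "q \<in> U" for q
  proof -
    have z: "slice_coord q \<in> slice_dom U" using slice_coord_in_slice_dom[OF U(1) q] .
    obtain b where "B (slice_coord q) = (b,0,0,0)" using B(2) z by blast
    then have "hmul hone (V (slice_coord q)) + hmul (B (slice_coord q)) (G (slice_coord q)) = 0"
      using bspec[OF rel z] by (simp add: hone_def hmul_scalar_left quat_coords)
    then show ?thesis
      using star_unit_eval[OF U(1) hone_stem V q] star_unit_eval[OF U(1) B(1) G q]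
      by (simp add: unit_eval_add[symmetric])
  qed
  moreover have "(hone::quat) \<noteq> 0" by (simp add: hone_def quat_zero_tuple)
  ultimately show "\<exists>V. p \<in> V \<and> V \<subseteq> U \<and> open V \<and> connected V \<and> axially_symmetric V \<and>
      (\<exists>\<alpha> \<beta>. slice_preserving V \<alpha> \<and> slice_preserving V \<beta> \<and>
         (\<exists>q\<in>V. \<alpha> q \<noteq> 0 \<or> \<beta> q \<noteq> 0) \<and> (\<forall>q\<in>V. star V \<alpha> fv q + star V \<beta> gv q = 0))"
    using p U by blast
qed

section \<open>Vectors of H \<otimes> C\<close>

definition hdot :: "bquat \<Rightarrow> bquat \<Rightarrow> complex" where
  "hdot P Q = c1 P * cnj (c1 Q) + c2 P * cnj (c2 Q) + c3 P * cnj (c3 Q)"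

lemma hdot_self_nonzero:
  assumes "c0 G = 0" "G \<noteq> 0"
  shows "hdot G G \<noteq> 0"
proof -
  have nz: "c1 G \<noteq> 0 \<or> c2 G \<noteq> 0 \<or> c3 G \<noteq> 0"
    using assms by (cases G) (auto simp: quat_coords bquat_zero_tuple)
  have "hdot G G = complex_of_real ((cmod (c1 G))^2 + (cmod (c2 G))^2 + (cmod (c3 G))^2)"
    by (simp only: hdot_def of_real_add complex_norm_square)
  moreover have "(cmod (c1 G))^2 + (cmod (c2 G))^2 + (cmod (c3 G))^2 > 0"
    using nz by (auto simp: add_pos_nonneg add_nonneg_pos)
  ultimately show ?thesis by (metis less_irrefl of_real_eq_0_iff)
qed

lemma parallel_eq_cscale:
  assumes F0: "c0 F = 0" and G0: "c0 G = 0" "G \<noteq> 0" and par: "parallel F G"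
  shows "F = cscale (hdot F G / hdot G G) G"
proof -
  define D where "D = hdot G G"
  define S where "S = hdot F G"
  have D: "D \<noteq> 0" using hdot_self_nonzero[OF G0] by (simp add: D_def)
  have e: "c1 F * c2 G = c2 F * c1 G" "c1 F * c3 G = c3 F * c1 G" "c2 F * c3 G = c3 F * c2 G"
    using par by (simp_all add: parallel_def mult.commute)
  have "c1 F * D = S * c1 G" "c2 F * D = S * c2 G" "c3 F * D = S * c3 G"
    unfolding D_def S_def hdot_def using e by algebra+
  then have "c1 F = S / D * c1 G" "c2 F = S / D * c2 G" "c3 F = S / D * c3 G"
    using D by (simp_all add: field_simps)
  then show ?thesis using F0 G0
    by (cases F) (simp add: cscale_def quat_coords S_def D_def)
qed

lemma lagrange_identity3:
  fixes a b c x y z :: real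
  shows "(b*z - c*y)^2 + (c*x - a*z)^2 + (a*y - b*x)^2
           = (a^2+b^2+c^2)*(x^2+y^2+z^2) - (a*x + b*y + c*z)^2"
  by algebra

lemma vsq_vec:
  "vsq (0, r1 + \<i> * i1, r2 + \<i> * i2, r3 + \<i> * i3) =
     complex_of_real ((r1^2+r2^2+r3^2) - (i1^2+i2^2+i3^2))
     + \<i> * complex_of_real (2 * (r1*i1 + r2*i2 + r3*i3))"
  by (simp add: vsq_def quat_coords complex_eq_iff power2_eq_square algebra_simps)

lemma unit_eval_vec:
  "unit_eval (0,j1,j2,j3) (0, r1 + \<i> * i1, r2 + \<i> * i2, r3 + \<i> * i3) =
     (- (j1*i1 + j2*i2 + j3*i3), r1 + (j2*i3 - j3*i2), r2 + (j3*i1 - j1*i3), r3 + (j1*i2 - j2*i1))"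
  by (simp add: unit_eval_def bre_def bim_def quat_coords hmul_def algebra_simps)

lemma bquat_vec_decomp:
  "c0 P = 0 \<Longrightarrow> P = (0, complex_of_real (Re (c1 P)) + \<i> * complex_of_real (Im (c1 P)),
     complex_of_real (Re (c2 P)) + \<i> * complex_of_real (Im (c2 P)),
     complex_of_real (Re (c3 P)) + \<i> * complex_of_real (Im (c3 P)))"
  by (cases P) (simp add: quat_coords complex_eq_iff)

text \<open>A vector r + i s of H \<otimes> C vanishes at some imaginary unit iff it is isotropic
  (v.v = |r|^2 - |s|^2 + 2 i r.s = 0), the unit being s \<times> r / |s|^2.\<close>

lemma isotropic_of_unit_eval_zero:
  fixes j1 j2 j3 r1 r2 r3 i1 i2 i3 :: real
  assumes u: "j1^2+j2^2+j3^2 = 1"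
    and z: "unit_eval (0,j1,j2,j3) (0, r1 + \<i> * i1, r2 + \<i> * i2, r3 + \<i> * i3) = 0"
  shows "vsq (0, r1 + \<i> * i1, r2 + \<i> * i2, r3 + \<i> * i3) = 0"
proof -
  have e: "j1*i1 + j2*i2 + j3*i3 = 0" "r1 = - (j2*i3 - j3*i2)" "r2 = - (j3*i1 - j1*i3)"
    "r3 = - (j1*i2 - j2*i1)"
    using z unfolding unit_eval_vec by (simp_all add: quat_zero_tuple eq_neg_iff_add_eq_0)
  have "r1^2+r2^2+r3^2 = (j2*i3 - j3*i2)^2 + (j3*i1 - j1*i3)^2 + (j1*i2 - j2*i1)^2"
    unfolding e(2-4) by (simp add: power2_eq_square algebra_simps)
  also have "\<dots> = (j1^2+j2^2+j3^2)*(i1^2+i2^2+i3^2) - (j1*i1 + j2*i2 + j3*i3)^2"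
    by (rule lagrange_identity3[where a=j1 and b=j2 and c=j3 and x=i1 and y=i2 and z=i3])
  finally have "r1^2+r2^2+r3^2 = i1^2+i2^2+i3^2" using u e(1) by simp
  moreover have "r1*i1 + r2*i2 + r3*i3 = 0" unfolding e(2-4) by (simp add: algebra_simps)
  ultimately show ?thesis by (simp add: vsq_vec)
qed

lemma unit_eval_zero_of_isotropic:
  fixes n r1 r2 r3 i1 i2 i3 :: real
  assumes rn: "r1^2+r2^2+r3^2 = n" and inn: "i1^2+i2^2+i3^2 = n" and n: "n > 0"
    and ri: "r1*i1 + r2*i2 + r3*i3 = 0"
  defines "j1 \<equiv> (r2*i3 - r3*i2)/n" and "j2 \<equiv> (r3*i1 - r1*i3)/n" and "j3 \<equiv> (r1*i2 - r2*i1)/n"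
  shows "(0,j1,j2,j3) \<in> \<SS>" "unit_eval (0,j1,j2,j3) (0, r1 + \<i> * i1, r2 + \<i> * i2, r3 + \<i> * i3) = 0"
proof -
  have "(r2*i3 - r3*i2)^2 + (r3*i1 - r1*i3)^2 + (r1*i2 - r2*i1)^2 = n * n"
    using lagrange_identity3[where a=r1 and b=r2 and c=r3 and x=i1 and y=i2 and z=i3] rn inn ri
    by simp
  then have "j1^2+j2^2+j3^2 = 1" using n
    by (simp add: j1_def j2_def j3_def power_divide add_divide_distrib[symmetric] power2_eq_square)
  then show "(0,j1,j2,j3) \<in> \<SS>" by (auto simp: imag_units_iff)
  have d: "j1*i1 + j2*i2 + j3*i3 = 0"
    unfolding j1_def j2_def j3_def using n by (simp add: field_simps)
  have "n * (j2*i3 - j3*i2) = i1 * (r1*i1 + r2*i2 + r3*i3) - r1 * (i1^2+i2^2+i3^2)"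
    "n * (j3*i1 - j1*i3) = i2 * (r1*i1 + r2*i2 + r3*i3) - r2 * (i1^2+i2^2+i3^2)"
    "n * (j1*i2 - j2*i1) = i3 * (r1*i1 + r2*i2 + r3*i3) - r3 * (i1^2+i2^2+i3^2)"
    unfolding j1_def j2_def j3_def using n by (simp_all add: field_simps power2_eq_square)
  then have "n * (j2*i3 - j3*i2) = n * (- r1)" "n * (j3*i1 - j1*i3) = n * (- r2)"
    "n * (j1*i2 - j2*i1) = n * (- r3)"
    using ri inn by simp_all
  then have "j2*i3 - j3*i2 = - r1" "j3*i1 - j1*i3 = - r2" "j1*i2 - j2*i1 = - r3"
    using n by (metis less_irrefl mult_left_cancel)+
  then show "unit_eval (0,j1,j2,j3) (0, r1 + \<i> * i1, r2 + \<i> * i2, r3 + \<i> * i3) = 0"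
    unfolding unit_eval_vec using d by (simp add: quat_zero_tuple)
qed

lemma unit_eval_scalar: "unit_eval (0,b,c,d) (x,0,0,0) = (Re x, b * Im x, c * Im x, d * Im x)"
  by (simp add: unit_eval_def bre_def bim_def quat_coords hmul_def)

lemma unit_eval_inverse:
  assumes J: "J \<in> \<SS> \<or> (J = 0 \<and> Im H = 0)" and H: "H \<noteq> 0"
  shows "unit_eval J (inverse H, 0, 0, 0) = qinv (unit_eval J (H, 0, 0, 0))"
proof (cases "J = 0")
  case True
  then have iH: "Im H = 0" using J by (auto simp: imag_units_iff quat_zero_tuple)
  then have "Re H \<noteq> 0" using H by (simp add: complex_eq_iff)
  then show ?thesis using True iH
    by (simp add: unit_eval_def bre_def bim_def quat_coords qinv_def qconj_def norm_quat_coords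
        power2_eq_square Re_divide Im_divide inverse_eq_divide)
next
  case False
  then obtain b c d where Jd: "J = (0,b,c,d)" and u: "b^2+c^2+d^2 = 1"
    using J imag_units_iff by auto
  have nn: "(Re H)^2 + (Im H)^2 \<noteq> 0" using H by (simp add: complex_eq_iff add_nonneg_eq_0_iff)
  have "(norm (Re H, b * Im H, c * Im H, d * Im H))^2 = (Re H)^2 + (b^2+c^2+d^2) * (Im H)^2"
    by (simp add: norm_quat_coords quat_coords power_mult_distrib algebra_simps)
  with u have n2: "(norm (Re H, b * Im H, c * Im H, d * Im H))^2 = (Re H)^2 + (Im H)^2" by simp
  show ?thesis unfolding Jd unit_eval_scalar qinv_def n2 using nn
    by (simp add: qconj_def quat_coords Re_divide Im_divide inverse_eq_divide power2_eq_square)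
qed

text \<open>At real points (J = 0) the evaluation is multiplicative only for real H.\<close>
lemma unit_eval_cscale_divide:
  assumes J: "J \<in> \<SS> \<or> (J = 0 \<and> Im H = 0)" and H: "H \<noteq> 0"
  shows "unit_eval J (cscale (complex_of_real c / H) X)
           = c *\<^sub>R hmul (qinv (unit_eval J (H, 0, 0, 0))) (unit_eval J X)"
proof -
  have "unit_eval J (cscale (inverse H) X) = hmul (unit_eval J (inverse H, 0, 0, 0)) (unit_eval J X)"
  proof (cases "J \<in> \<SS>")
    case True
    then show ?thesis by (rule unit_eval_cscale)
  next
    case False
    then have "J = 0" "Im (inverse H) = 0" using J by (auto simp: Im_divide inverse_eq_divide)
    then show ?thesis using unit_eval_zero_cscale by simp
  qed
  moreover have "cscale (complex_of_real c / H) X = c *\<^sub>R cscale (inverse H) X"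
    by (cases X) (simp add: cscale_def quat_coords scaleR_conv_of_real divide_inverse)
  ultimately show ?thesis by (simp add: unit_eval_scaleR unit_eval_inverse[OF J H])
qed

section \<open>A global square root of g_v^s\<close>

lemma symmetrization_eq:
  assumes U: "axially_symmetric U" and G: "is_stem U G f" and q: "q \<in> U"
  shows "symmetrization U f q = slicefun (\<lambda>z. ((c0 (G z))^2 + vsq (G z), 0, 0, 0)) q"
  unfolding symmetrization_def vsq_def
  by (rule slicefun_cong[OF U q]) (simp add: stem_of_eq[OF U G] add.assoc)

locale global_sqrt =
  fixes \<Omega> :: "quat set" and gv h :: "quat \<Rightarrow> quat"
  assumes axsym: "axially_symmetric \<Omega>" and slice_domain: "slice_domain \<Omega>"
    and minimal: "minimal_representative \<Omega> gv"
    and h_preserving: "slice_preserving \<Omega> h"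
    and h_square: "\<forall>q\<in>\<Omega>. star \<Omega> h h q = symmetrization \<Omega> gv q"
begin

definition gstem :: "complex \<Rightarrow> bquat" where
  "gstem = stem_of \<Omega> gv"

definition hroot :: "complex \<Rightarrow> complex" where
  "hroot z = c0 (stem_of \<Omega> h z)"

lemma open_domain: "open \<Omega>" and connected_domain: "connected \<Omega>"
  and real_point: "\<exists>x. qof_real x \<in> \<Omega>"
  using slice_domain by (auto simp: slice_domain_def)

lemma slice_coord_in_domain: "q \<in> \<Omega> \<Longrightarrow> slice_coord q \<in> slice_dom \<Omega>"
  using slice_coord_in_slice_dom[OF axsym] .

lemma gstem_stem: "is_stem \<Omega> gstem gv"
  and gstem_scalar: "z \<in> slice_dom \<Omega> \<Longrightarrow> c0 (gstem z) = 0"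
proof -
  obtain G where G: "is_stem \<Omega> G gv" "\<forall>z\<in>slice_dom \<Omega>. c0 (G z) = 0"
    using minimal by (auto simp: minimal_representative_def vectorial_def)
  show "is_stem \<Omega> gstem gv" unfolding gstem_def using stem_of_is_stem[OF axsym G(1)] .
  show "z \<in> slice_dom \<Omega> \<Longrightarrow> c0 (gstem z) = 0"
    unfolding gstem_def using stem_of_eq[OF axsym G(1)] G(2) by simp
qed

lemma hroot_stem: "is_stem \<Omega> (stem_of \<Omega> h) h"
  and hroot_stem_eq: "z \<in> slice_dom \<Omega> \<Longrightarrow> stem_of \<Omega> h z = (hroot z, 0, 0, 0)"
proof -
  obtain A where A: "is_stem \<Omega> A h" "\<forall>z\<in>slice_dom \<Omega>. A z = (c0 (A z), 0, 0, 0)"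
    using slice_preserving_stem[OF h_preserving] by blast
  show "is_stem \<Omega> (stem_of \<Omega> h) h" using stem_of_is_stem[OF axsym A(1)] .
  show "z \<in> slice_dom \<Omega> \<Longrightarrow> stem_of \<Omega> h z = (hroot z, 0, 0, 0)"
    using stem_of_eq[OF axsym A(1)] A(2) by (simp add: hroot_def)
qed

lemma hroot_holomorphic: "hroot holomorphic_on slice_dom \<Omega>"
  using holo_stemD(1)[OF is_stem_holo[OF hroot_stem]] by (simp add: hroot_def[abs_def])

lemma hroot_cnj: "z \<in> slice_dom \<Omega> \<Longrightarrow> hroot (cnj z) = cnj (hroot z)"
  using is_stem_cnj[OF hroot_stem] by (simp add: hroot_def coords_bcnj)

lemma hroot_real:
  assumes "z \<in> slice_dom \<Omega>" "Im z = 0"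
  shows "Im (hroot z) = 0"
proof -
  have "cnj z = z" using assms(2) by (simp add: complex_eq_iff)
  then have "cnj (hroot z) = hroot z" using hroot_cnj[OF assms(1)] by simp
  then show ?thesis by (simp add: complex_eq_iff)
qed

lemma hroot_square: "z \<in> slice_dom \<Omega> \<Longrightarrow> (hroot z)^2 = vsq (gstem z)"
proof -
  assume z: "z \<in> slice_dom \<Omega>"
  have "hmul (stem_of \<Omega> h z) (stem_of \<Omega> h z) = ((c0 (gstem z))^2 + vsq (gstem z), 0, 0, 0)"
  proof (rule stem_unique[OF axsym _ _ _ z])
    show "\<forall>z\<in>slice_dom \<Omega>. hmul (stem_of \<Omega> h (cnj z)) (stem_of \<Omega> h (cnj z))
            = bcnj (hmul (stem_of \<Omega> h z) (stem_of \<Omega> h z))"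
      using is_stem_cnj[OF hroot_stem] by (simp add: bcnj_hmul)
    show "\<forall>z\<in>slice_dom \<Omega>. ((c0 (gstem (cnj z)))^2 + vsq (gstem (cnj z)), 0::complex, 0::complex, 0::complex)
            = bcnj ((c0 (gstem z))^2 + vsq (gstem z), 0, 0, 0)"
      using is_stem_cnj[OF gstem_stem] by (simp add: bcnj_tuple vsq_bcnj coords_bcnj)
    show "\<forall>q\<in>\<Omega>. slicefun (\<lambda>z. hmul (stem_of \<Omega> h z) (stem_of \<Omega> h z)) q
            = slicefun (\<lambda>z. ((c0 (gstem z))\<^sup>2 + vsq (gstem z), 0, 0, 0)) q"
      using h_square star_unit_eval[OF axsym hroot_stem hroot_stem] symmetrization_eq[OF axsym gstem_stem]
      by (simp add: slicefun_unit_eval)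
  qed
  then show ?thesis
    using hroot_stem_eq[OF z] gstem_scalar[OF z] by (simp add: hmul_scalar_left cscale_def quat_coords power2_eq_square)
qed

lemma gv_real_nonzero:
  assumes "q \<in> \<Omega>" "qvec q = 0"
  shows "gv q \<noteq> 0"
proof -
  have "qof_real (c0 q) \<in> \<Omega>" using assms qvec_eq_0_real by simp
  then have "gv (qof_real (c0 q)) \<noteq> 0" using minimal by (simp add: minimal_representative_def)
  then show ?thesis using qvec_eq_0_real[OF assms(2)] by simp
qed

lemma gstem_nonzero:
  assumes q: "q \<in> \<Omega>"
  shows "gstem (slice_coord q) \<noteq> 0"
proof (cases "qvec q = 0")
  case True
  then have "gv q \<noteq> 0" using gv_real_nonzero q by blast
  then show ?thesis using is_stem_eval[OF gstem_stem q] by auto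
next
  case False
  define x where "x = c0 q"
  define y where "y = norm (qvec q)"
  have y: "y > 0" using False by (simp add: y_def)
  have "qof_real x + y *\<^sub>R qi \<in> \<Omega>"
    using axially_symmetric_rotate[OF axsym q False qi_imag_unit] by (simp add: x_def y_def)
  moreover have "y \<noteq> 0" using y by simp
  ultimately obtain J where J: "J \<in> \<SS>" "gv (qof_real x + y *\<^sub>R J) \<noteq> 0"
    using minimal unfolding minimal_representative_def by blast
  have "qof_real x + y *\<^sub>R J \<in> \<Omega>"
    using axially_symmetric_rotate[OF axsym q False J(1)] by (simp add: x_def y_def)
  then have "gv (qof_real x + y *\<^sub>R J) = unit_eval J (gstem (slice_coord q))"
    using is_stem_eval[OF gstem_stem] slice_coord_slice[OF J(1) y] imag_dir_slice[OF J(1) y]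
    by (simp add: slice_coord_def x_def y_def)
  then show ?thesis using J(2) by auto
qed

lemma gstem_coords:
  assumes "q \<in> \<Omega>"
  obtains r1 r2 r3 i1 i2 i3 :: real
  where "gstem (slice_coord q) = (0, r1 + \<i> * i1, r2 + \<i> * i2, r3 + \<i> * i3)"
  using bquat_vec_decomp[OF gstem_scalar[OF slice_coord_in_domain[OF assms]]] that by blast

lemma zero_imp_vsq_gstem_zero:
  assumes q: "q \<in> \<Omega>" and z: "gv q = 0"
  shows "vsq (gstem (slice_coord q)) = 0"
proof -
  have qv: "qvec q \<noteq> 0" using gv_real_nonzero q z by blast
  obtain j1 j2 j3 where J: "imag_dir q = (0,j1,j2,j3)" "j1^2+j2^2+j3^2 = 1"
    using imag_dir_imag_unit[OF qv] imag_units_iff by auto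
  obtain r1 r2 r3 i1 i2 i3 :: real where G: "gstem (slice_coord q) = (0, r1 + \<i> * i1, r2 + \<i> * i2, r3 + \<i> * i3)"
    using gstem_coords[OF q] .
  have "unit_eval (0,j1,j2,j3) (0, r1 + \<i> * i1, r2 + \<i> * i2, r3 + \<i> * i3) = 0"
    using is_stem_eval[OF gstem_stem q] z J(1) G by simp
  from isotropic_of_unit_eval_zero[OF J(2) this] show ?thesis by (simp add: G)
qed

lemma vsq_gstem_zero_imp_zero:
  assumes q: "q \<in> \<Omega>" and s: "vsq (gstem (slice_coord q)) = 0"
  shows "\<exists>q'\<in>\<Omega>. gv q' = 0"
proof -
  obtain r1 r2 r3 i1 i2 i3 :: real where G: "gstem (slice_coord q) = (0, r1 + \<i> * i1, r2 + \<i> * i2, r3 + \<i> * i3)"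
    using gstem_coords[OF q] .
  define n where "n = i1^2+i2^2+i3^2"
  have e: "r1^2+r2^2+r3^2 = n" "r1*i1 + r2*i2 + r3*i3 = 0"
    using s unfolding G vsq_vec by (simp_all add: complex_eq_iff n_def)
  have "n \<noteq> 0"
  proof
    assume "n = 0"
    with e(1) have "i1 = 0" "i2 = 0" "i3 = 0" "r1 = 0" "r2 = 0" "r3 = 0"
      by (simp_all add: n_def add_nonneg_eq_0_iff)
    then show False using gstem_nonzero[OF q] G by (simp add: bquat_zero_tuple)
  qed
  moreover have "n \<ge> 0" by (simp add: n_def)
  ultimately have n: "n > 0" by simp
  have qv: "qvec q \<noteq> 0"
  proof
    assume "qvec q = 0"
    then have "slice_coord q = complex_of_real (c0 q)" by (simp add: slice_coord_def complex_eq_iff)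
    then have "bcnj (gstem (slice_coord q)) = gstem (slice_coord q)"
      using is_stem_real[OF gstem_stem] slice_coord_in_domain[OF q] by simp
    then have "i1 = 0" "i2 = 0" "i3 = 0" unfolding G by (simp_all add: bcnj_tuple complex_eq_iff)
    then show False using n by (simp add: n_def)
  qed
  define y where "y = norm (qvec q)"
  have y: "y > 0" using qv by (simp add: y_def)
  note J = unit_eval_zero_of_isotropic[OF e(1) n_def[symmetric] n e(2)]
  let ?J = "(0, (r2*i3 - r3*i2)/n, (r3*i1 - r1*i3)/n, (r1*i2 - r2*i1)/n)"
  have qJ: "qof_real (c0 q) + y *\<^sub>R ?J \<in> \<Omega>"
    using axially_symmetric_rotate[OF axsym q qv J(1)] by (simp add: y_def)
  have "gv (qof_real (c0 q) + y *\<^sub>R ?J) = unit_eval ?J (gstem (slice_coord q))"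
    using is_stem_eval[OF gstem_stem qJ] slice_coord_slice[OF J(1) y] imag_dir_slice[OF J(1) y]
    by (simp add: slice_coord_def y_def)
  then show ?thesis using qJ J(2) G by auto
qed

lemma hroot_nonzero:
  assumes Z: "zero_set \<Omega> gv = {}" and z: "z \<in> slice_dom \<Omega>"
  shows "hroot z \<noteq> 0"
proof -
  have upper: "hroot w \<noteq> 0" if w: "w \<in> slice_dom \<Omega>" "Im w \<ge> 0" for w
  proof
    assume "hroot w = 0"
    then have "vsq (gstem (slice_coord (quat_of_complex w))) = 0"
      using hroot_square[OF w(1)] slice_coord_quat_of_complex[OF w(2)] by simp
    moreover have "quat_of_complex w \<in> \<Omega>" using w(1) by (simp add: slice_dom_iff)
    ultimately obtain q' where "q' \<in> \<Omega>" "gv q' = 0"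
      using vsq_gstem_zero_imp_zero by blast
    then have "q' \<in> zero_set \<Omega> gv" by (simp add: zero_set_def)
    then show False using Z by simp
  qed
  show ?thesis
  proof (cases "Im z \<ge> 0")
    case False
    then have "hroot (cnj z) \<noteq> 0" using upper[OF slice_dom_cnj[OF axsym z]] by simp
    then show ?thesis using hroot_cnj[OF z] by auto
  qed (use upper z in blast)
qed

definition gcoeff :: "(complex \<Rightarrow> bquat) \<Rightarrow> complex \<Rightarrow> complex" where
  "gcoeff F w = hdot (F w) (gstem w) / hdot (gstem w) (gstem w)"

lemma K_section_stem:
  assumes "f \<in> K_sections \<Omega> gv"
  obtains F N where "is_stem \<Omega> F f"
    "\<forall>w\<in>slice_coord ` \<Omega>. bexp (F w) = hone \<and> c0 (F w) = 0
       \<and> vsq (F w) = (complex_of_real (2 * of_int N * pi))^2 \<and> parallel (F w) (gstem w)"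
proof -
  have SR: "SR_omega \<Omega> gv f" and E: "star_exp_is_one \<Omega> f"
    using assms by (simp_all add: K_sections_def)
  obtain F where F: "is_stem \<Omega> F f" using SR by (auto simp: SR_omega_def slice_regular_def)
  obtain x0 where x0: "qof_real x0 \<in> \<Omega>" using real_point by blast
  have E': "\<forall>z\<in>slice_dom \<Omega>. bexp (F z) = hone"
    using star_exp_is_one_iff[OF axsym F] E by simp
  have scalar: "\<forall>w\<in>slice_coord ` \<Omega>. c0 (F w) = 0"
    using bexp_hone_scalar_zero[OF axsym connected_domain x0 F E'] .
  obtain N where "\<forall>w\<in>slice_coord ` \<Omega>. vsq (F w) = (complex_of_real (2 * of_int N * pi))^2"
    using bexp_hone_vsq_const[OF axsym connected_domain x0 F E' scalar] by blast
  moreover have "\<forall>w\<in>slice_coord ` \<Omega>. parallel (F w) (gstem w)"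
    using locally_dependent_parallel[OF axsym F gstem_stem] SR by (auto simp: SR_omega_def)
  moreover have "\<forall>w\<in>slice_coord ` \<Omega>. bexp (F w) = hone"
    using E' slice_coord_in_domain by blast
  ultimately show thesis
    using scalar by (intro that[OF F, of N]) simp
qed

lemma K_section_multiple:
  assumes q: "q \<in> \<Omega>" and F0: "c0 (F (slice_coord q)) = 0"
    and par: "parallel (F (slice_coord q)) (gstem (slice_coord q))"
  shows "F (slice_coord q) = cscale (gcoeff F (slice_coord q)) (gstem (slice_coord q))"
    "vsq (F (slice_coord q)) = (gcoeff F (slice_coord q) * hroot (slice_coord q))^2"
proof -
  define w where "w = slice_coord q"
  have w: "w \<in> slice_dom \<Omega>" using slice_coord_in_domain[OF q] by (simp add: w_def)
  have "F w = cscale (gcoeff F w) (gstem w)"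
    using parallel_eq_cscale F0 gstem_scalar[OF w] gstem_nonzero[OF q] par
    by (simp add: gcoeff_def w_def)
  then show "F (slice_coord q) = cscale (gcoeff F (slice_coord q)) (gstem (slice_coord q))"
    by (simp add: w_def)
  then show "vsq (F (slice_coord q)) = (gcoeff F (slice_coord q) * hroot (slice_coord q))^2"
    using hroot_square[OF w] by (simp add: vsq_cscale power_mult_distrib w_def)
qed

lemma K_sections_zero_set_nonempty:
  assumes Z: "zero_set \<Omega> gv \<noteq> {}" and f: "f \<in> K_sections \<Omega> gv" and q: "q \<in> \<Omega>"
  shows "f q = 0"
proof -
  obtain F N where F: "is_stem \<Omega> F f"
    and facts: "\<forall>w\<in>slice_coord ` \<Omega>. bexp (F w) = hone \<and> c0 (F w) = 0
       \<and> vsq (F w) = (complex_of_real (2 * of_int N * pi))^2 \<and> parallel (F w) (gstem w)"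
    using K_section_stem[OF f] by blast
  obtain q0 where q0: "q0 \<in> \<Omega>" "gv q0 = 0" using Z by (auto simp: zero_set_def)
  have "hroot (slice_coord q0) = 0"
    using hroot_square[OF slice_coord_in_domain[OF q0(1)]] zero_imp_vsq_gstem_zero[OF q0] by simp
  then have "vsq (F (slice_coord q0)) = 0" using K_section_multiple(2)[OF q0(1)] facts q0(1) by simp
  then have "N = 0" using facts q0(1) by simp
  then have "F (slice_coord q) = 0" using bexp_eq_hone_nilpotent facts q by simp
  then show ?thesis using is_stem_eval[OF F q] by simp
qed

lemma hroot_real_point:
  assumes "q \<in> \<Omega>" "qvec q = 0"
  shows "Im (hroot (slice_coord q)) = 0"
  using hroot_real[OF slice_coord_in_domain[OF assms(1)]] assms(2) by (simp add: slice_coord_def)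

lemma unit_eval_scaled_gstem:
  assumes Z: "zero_set \<Omega> gv = {}" and q: "q \<in> \<Omega>"
  shows "unit_eval (imag_dir q) (cscale (complex_of_real c / hroot (slice_coord q)) (gstem (slice_coord q)))
           = c *\<^sub>R hmul (qinv (h q)) (gv q)"
proof -
  define w where "w = slice_coord q"
  have w: "w \<in> slice_dom \<Omega>" using slice_coord_in_domain[OF q] by (simp add: w_def)
  have J: "imag_dir q \<in> \<SS> \<or> (imag_dir q = 0 \<and> Im (hroot w) = 0)"
    using imag_dir_imag_unit hroot_real_point[OF q] by (cases "qvec q = 0") (auto simp: w_def imag_dir_def)
  have "h q = unit_eval (imag_dir q) (hroot w, 0, 0, 0)"
    using is_stem_eval[OF hroot_stem q] hroot_stem_eq[OF w] by (simp add: w_def)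
  moreover have "gv q = unit_eval (imag_dir q) (gstem w)"
    using is_stem_eval[OF gstem_stem q] by (simp add: w_def)
  ultimately show ?thesis
    using unit_eval_cscale_divide[OF J hroot_nonzero[OF Z w]] by (simp add: w_def)
qed

lemma gcoeff_continuous:
  assumes F: "is_stem \<Omega> F f"
  shows "continuous_on (slice_coord ` \<Omega>) (gcoeff F)"
proof -
  have "hdot (gstem w) (gstem w) \<noteq> 0" if "w \<in> slice_coord ` \<Omega>" for w
    using that hdot_self_nonzero gstem_scalar gstem_nonzero slice_coord_in_domain by blast
  then show ?thesis
    unfolding gcoeff_def[abs_def] hdot_def
    by (intro continuous_intros is_stem_continuous_on[OF axsym F] is_stem_continuous_on[OF axsym gstem_stem])
      (auto simp: hdot_def)
qed

lemma continuous_on_hroot: "continuous_on (slice_coord ` \<Omega>) hroot"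
  using is_stem_continuous_on(1)[OF axsym hroot_stem] by (simp add: hroot_def[abs_def])

text \<open>The coefficient of a section with respect to g_v / \<surd>(g_v^s) is a continuous square root of
  (2 N \<pi>)^2 on the connected set of slice coordinates, hence one of the constants \<plusminus>2 N \<pi>.\<close>
lemma K_section_coefficient_constant:
  assumes F: "is_stem \<Omega> F f" and N: "N \<noteq> 0"
    and facts: "\<forall>w\<in>slice_coord ` \<Omega>. c0 (F w) = 0
       \<and> vsq (F w) = (complex_of_real (2 * of_int N * pi))^2 \<and> parallel (F w) (gstem w)"
  obtains s :: int
  where "\<forall>w\<in>slice_coord ` \<Omega>. gcoeff F w * hroot w = complex_of_real (2 * of_int (s * N) * pi)"
proof -
  define S where "S = slice_coord ` \<Omega>"
  define c where "c = complex_of_real (2 * of_int N * pi)"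
  define \<sigma> where "\<sigma> w = gcoeff F w * hroot w / c" for w
  have c: "c \<noteq> 0" using N by (simp add: c_def)
  have sq: "\<sigma> w = 1 \<or> \<sigma> w = -1" if w: "w \<in> S" for w
  proof -
    obtain q where q: "q \<in> \<Omega>" "w = slice_coord q" using w by (auto simp: S_def)
    moreover have "c0 (F (slice_coord q)) = 0" "parallel (F (slice_coord q)) (gstem (slice_coord q))"
      "vsq (F (slice_coord q)) = c^2"
      using facts q(1) by (simp_all add: c_def)
    ultimately have "(gcoeff F w * hroot w)^2 = c^2"
      using K_section_multiple(2)[OF q(1)] by simp
    then have "(\<sigma> w)^2 = 1" using c by (simp add: \<sigma>_def power_divide)
    then show ?thesis by (simp add: power2_eq_1_iff)
  qed
  obtain x0 where x0: "qof_real x0 \<in> \<Omega>" using real_point by blast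
  have w0: "complex_of_real x0 \<in> S" using imageI[OF x0, of slice_coord] by (simp add: S_def)
  have "connected S"
    unfolding S_def by (rule connected_continuous_image[OF continuous_on_slice_coord connected_domain])
  moreover have "continuous_on S \<sigma>"
    unfolding \<sigma>_def S_def using gcoeff_continuous[OF F] continuous_on_hroot c
    by (intro continuous_intros) auto
  moreover have "\<forall>w\<in>S. \<sigma> w \<in> \<int>"
    using sq by fastforce
  ultimately have const: "\<sigma> w = \<sigma> (complex_of_real x0)" if "w \<in> S" for w
    using continuous_Ints_valued_constant that w0 by blast
  define s :: int where "s = (if \<sigma> (complex_of_real x0) = 1 then 1 else -1)"
  have "\<sigma> (complex_of_real x0) = of_int s" using sq[OF w0] by (auto simp: s_def)
  then have "gcoeff F w * hroot w = complex_of_real (2 * of_int (s * N) * pi)" if "w \<in> S" for w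
    using const[OF that] c by (simp add: \<sigma>_def c_def field_simps)
  then show thesis by (intro that[of s]) (simp add: S_def)
qed

lemma K_sections_zero_set_empty:
  assumes Z: "zero_set \<Omega> gv = {}" and f: "f \<in> K_sections \<Omega> gv"
  shows "\<exists>n::int. \<forall>q\<in>\<Omega>. f q = (2 * of_int n * pi) *\<^sub>R hmul (qinv (h q)) (gv q)"
proof -
  obtain F N where F: "is_stem \<Omega> F f"
    and facts: "\<forall>w\<in>slice_coord ` \<Omega>. bexp (F w) = hone \<and> c0 (F w) = 0
       \<and> vsq (F w) = (complex_of_real (2 * of_int N * pi))^2 \<and> parallel (F w) (gstem w)"
    using K_section_stem[OF f] by blast
  show ?thesis
  proof (cases "N = 0")
    case True
    have "f q = 0" if q: "q \<in> \<Omega>" for q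
    proof -
      have "F (slice_coord q) = 0" using bexp_eq_hone_nilpotent facts q True by simp
      then show ?thesis using is_stem_eval[OF F q] by simp
    qed
    then show ?thesis by (intro exI[of _ 0]) simp
  next
    case False
    then obtain s :: int
      where s: "\<forall>w\<in>slice_coord ` \<Omega>. gcoeff F w * hroot w = complex_of_real (2 * of_int (s * N) * pi)"
      using K_section_coefficient_constant[OF F] facts by blast
    define c :: real where "c = 2 * of_int (s * N) * pi"
    have "f q = c *\<^sub>R hmul (qinv (h q)) (gv q)" if q: "q \<in> \<Omega>" for q
    proof -
      define w where "w = slice_coord q"
      have "gcoeff F w = complex_of_real c / hroot w"
        using s hroot_nonzero[OF Z slice_coord_in_domain[OF q]] q by (simp add: w_def c_def field_simps)
      moreover have "F w = cscale (gcoeff F w) (gstem w)"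
        using K_section_multiple(1)[OF q] facts q by (simp add: w_def)
      ultimately have "f q = unit_eval (imag_dir q) (cscale (complex_of_real c / hroot w) (gstem w))"
        using is_stem_eval[OF F q] by (simp add: w_def)
      then show ?thesis using unit_eval_scaled_gstem[OF Z q] by (simp add: w_def)
    qed
    then show ?thesis unfolding c_def by blast
  qed
qed

text \<open>Local dependence is witnessed on all of \<Omega> by the relation 1 * f_v + (-a) * g_v = 0.\<close>
lemma K_sections_of_multiple:
  assumes F: "is_stem \<Omega> F f" and a: "a holomorphic_on slice_dom \<Omega>"
    and a_cnj: "\<forall>z\<in>slice_dom \<Omega>. a (cnj z) = cnj (a z)"
    and mult: "\<forall>z\<in>slice_dom \<Omega>. F z = cscale (a z) (gstem z)"
    and E: "\<forall>z\<in>slice_dom \<Omega>. bexp (F z) = hone"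
  shows "f \<in> K_sections \<Omega> gv"
proof -
  define B where "B z = (- a z, 0::complex, 0::complex, 0::complex)" for z
  have B: "is_stem \<Omega> B (slicefun B)"
    using a a_cnj by (simp add: is_stem_def holo_stem_def B_def quat_coords bcnj_tuple holomorphic_on_minus)
  have "bvec (F z) + cscale (c0 (B z)) (gstem z) = 0" if z: "z \<in> slice_dom \<Omega>" for z
    using mult gstem_scalar[OF z] z
    by (cases "gstem z") (simp add: bvec_def B_def cscale_def quat_coords bquat_zero_tuple)
  then have "locally_dependent \<Omega> (vect_part \<Omega> f) gv"
    using locally_dependent_of_stems[OF axsym open_domain connected_domain
        vect_part_stem[OF axsym F] gstem_stem B] by (simp add: B_def quat_coords)
  moreover have "slice_regular \<Omega> f" using F by (auto simp: slice_regular_def)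
  moreover have "star_exp_is_one \<Omega> f" using star_exp_is_one_iff[OF axsym F] E by simp
  ultimately show ?thesis by (simp add: K_sections_def SR_omega_def)
qed

lemma K_sections_of_formula:
  assumes Z: "zero_set \<Omega> gv = {}"
    and f: "\<forall>q\<in>\<Omega>. f q = (2 * of_int n * pi) *\<^sub>R hmul (qinv (h q)) (gv q)"
  shows "f \<in> K_sections \<Omega> gv"
proof -
  define c :: real where "c = 2 * of_int n * pi"
  define a where "a z = complex_of_real c / hroot z" for z
  define F where "F z = cscale (a z) (gstem z)" for z
  have a: "a holomorphic_on slice_dom \<Omega>"
    unfolding a_def[abs_def] using hroot_holomorphic hroot_nonzero[OF Z]
    by (intro holomorphic_intros) auto
  have a_cnj: "\<forall>z\<in>slice_dom \<Omega>. a (cnj z) = cnj (a z)"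
    by (simp add: a_def hroot_cnj)
  have "is_stem \<Omega> F f"
    unfolding is_stem_def holo_stem_def
  proof (intro conjI ballI)
    show "(\<lambda>z. c0 (F z)) holomorphic_on slice_dom \<Omega>" "(\<lambda>z. c1 (F z)) holomorphic_on slice_dom \<Omega>"
      "(\<lambda>z. c2 (F z)) holomorphic_on slice_dom \<Omega>" "(\<lambda>z. c3 (F z)) holomorphic_on slice_dom \<Omega>"
      using holo_stemD[OF is_stem_holo[OF gstem_stem]] a
      by (auto simp: F_def cscale_def quat_coords intro!: holomorphic_intros)
    show "F (cnj z) = bcnj (F z)" if "z \<in> slice_dom \<Omega>" for z
      using that a_cnj is_stem_cnj[OF gstem_stem] by (simp add: F_def bcnj_cscale)
    show "f q = slicefun F q" if q: "q \<in> \<Omega>" for q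
    proof -
      have "f q = c *\<^sub>R hmul (qinv (h q)) (gv q)" using f q by (simp add: c_def)
      then show ?thesis
        using unit_eval_scaled_gstem[OF Z q, of c] by (simp add: slicefun_unit_eval F_def a_def)
    qed
  qed
  moreover have "bexp (F z) = hone" if z: "z \<in> slice_dom \<Omega>" for z
  proof (rule bexp_eq_hone_of_vsq)
    show "c0 (F z) = 0" using gstem_scalar[OF z] by (simp add: F_def cscale_def quat_coords)
    show "vsq (F z) = (complex_of_real (2 * of_int n * pi))^2"
      using hroot_nonzero[OF Z z]
      by (simp add: F_def a_def c_def vsq_cscale power_divide flip: hroot_square[OF z])
    show "n \<noteq> 0 \<or> F z = 0"
      by (cases "n = 0") (simp_all add: F_def a_def c_def cscale_def bquat_zero_tuple)
  qed
  ultimately show ?thesis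
    using K_sections_of_multiple a a_cnj by (simp add: F_def)
qed

lemma K_sections_of_zero:
  assumes "\<forall>q\<in>\<Omega>. f q = 0"
  shows "f \<in> K_sections \<Omega> gv"
proof (rule K_sections_of_multiple[where a = "\<lambda>_. 0"])
  show "is_stem \<Omega> (\<lambda>_. 0) f"
    using assms by (simp add: is_stem_def holo_stem_def quat_coords slicefun_unit_eval)
  show "\<forall>z\<in>slice_dom \<Omega>. bexp 0 = hone"
    by (simp add: bexp_eq_hone_of_vsq[where n = 0] vsq_def quat_coords bquat_zero_tuple)
qed (simp_all add: cscale_def bquat_zero_tuple)

lemma formula_coefficient_unique:
  assumes Z: "zero_set \<Omega> gv = {}"
    and e: "\<forall>q\<in>\<Omega>. (2 * of_int n * pi) *\<^sub>R hmul (qinv (h q)) (gv q)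
                   = (2 * of_int m * pi) *\<^sub>R hmul (qinv (h q)) (gv q)"
  shows "n = m"
proof -
  obtain x0 where x0: "qof_real x0 \<in> \<Omega>" using real_point by blast
  define w where "w = complex_of_real x0"
  have w: "w \<in> slice_dom \<Omega>" using slice_coord_in_domain[OF x0] by (simp add: w_def)
  define P where "P = cscale (1 / hroot w) (gstem w)"
  have "hmul (qinv (h (qof_real x0))) (gv (qof_real x0)) = unit_eval 0 P"
    using unit_eval_scaled_gstem[OF Z x0, of 1] by (simp add: P_def w_def)
  moreover have "P \<noteq> 0"
    using hroot_nonzero[OF Z w] gstem_nonzero[OF x0]
    by (cases "gstem w") (auto simp: P_def w_def cscale_def quat_coords bquat_zero_tuple)
  moreover have real: "bcnj P = P"
    using is_stem_real[OF gstem_stem w[unfolded w_def]] hroot_cnj[OF w]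
    by (simp add: P_def bcnj_cscale w_def)
  moreover have "unit_eval 0 P \<noteq> 0"
  proof
    assume "unit_eval 0 P = 0"
    then have "P = 0"
      using unit_eval_zero_real[OF real] by (intro bquat_eqI) simp_all
    with \<open>P \<noteq> 0\<close> show False ..
  qed
  ultimately have "hmul (qinv (h (qof_real x0))) (gv (qof_real x0)) \<noteq> 0" by simp
  then show ?thesis using e x0 by (auto simp: scaleR_cancel_right)
qed

end

theorem mainTheorem11:
  fixes \<Omega> :: "quat set" and gv h :: "quat \<Rightarrow> quat"
  assumes "axially_symmetric \<Omega>" and "slice_domain \<Omega>"
    and "minimal_representative \<Omega> gv"
    and "slice_preserving \<Omega> h"
    and "\<forall>q\<in>\<Omega>. star \<Omega> h h q = symmetrization \<Omega> gv q"
  shows "(zero_set \<Omega> gv = {} \<longrightarrow>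
           (\<forall>f. f \<in> K_sections \<Omega> gv \<longleftrightarrow>
              (\<exists>n::int. \<forall>q\<in>\<Omega>. f q = (2 * of_int n * pi) *\<^sub>R hmul (qinv (h q)) (gv q))) \<and>
           (\<forall>n m::int. (\<forall>q\<in>\<Omega>. (2 * of_int n * pi) *\<^sub>R hmul (qinv (h q)) (gv q)
                                = (2 * of_int m * pi) *\<^sub>R hmul (qinv (h q)) (gv q)) \<longrightarrow> n = m))
       \<and> (zero_set \<Omega> gv \<noteq> {} \<longrightarrow>
           (\<forall>f. f \<in> K_sections \<Omega> gv \<longleftrightarrow> (\<forall>q\<in>\<Omega>. f q = 0)))"
proof -
  interpret global_sqrt \<Omega> gv h
    using assms by unfold_locales
  show ?thesis
  proof (intro conjI impI allI)
    fix f assume "zero_set \<Omega> gv = {}"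
    then show "f \<in> K_sections \<Omega> gv \<longleftrightarrow>
        (\<exists>n::int. \<forall>q\<in>\<Omega>. f q = (2 * of_int n * pi) *\<^sub>R hmul (qinv (h q)) (gv q))"
      using K_sections_zero_set_empty K_sections_of_formula by blast
  next
    fix n m :: int
    assume "zero_set \<Omega> gv = {}" "\<forall>q\<in>\<Omega>. (2 * of_int n * pi) *\<^sub>R hmul (qinv (h q)) (gv q)
        = (2 * of_int m * pi) *\<^sub>R hmul (qinv (h q)) (gv q)"
    then show "n = m" by (rule formula_coefficient_unique)
  next
    fix f assume "zero_set \<Omega> gv \<noteq> {}"
    then show "f \<in> K_sections \<Omega> gv \<longleftrightarrow> (\<forall>q\<in>\<Omega>. f q = 0)"
      using K_sections_zero_set_nonempty K_sections_of_zero by blast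
  qed
qed

end
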